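(* Let $q=q(n)\in[0,1]$ satisfy $n\sqrt{q}\,e^{-qn}\gg1$, and let $M$ be the maximum number of edges in a matching of the random graph $G_{n,q}$. Then for every $\varepsilon>0$ there is a constant $d=d(\varepsilon)>0$ such that for every interval $I$ of length $\lfloor dn\sqrt{q}\,e^{-qn}\rfloor$ we have $\Pr(M\in I)\le\varepsilon+o(1)$ (with the $o(1)$ term tending to $0$ as $n\to\infty$ uniformly over such intervals).
   Context: $G_{n,q}$ denotes the binomial random graph on vertex set $[n]$ in which each pair of vertices is an edge independently with probability $q$. For positive functions, $a\gg b$ means $a/b\to\infty$ as $n\to\infty$. *)

theory Defs
  imports Complex_Main
begin

definition all_pairs :: "nat \<Rightarrow> nat set set" where
  "all_pairs n = {e. \<exists>i j. i \<in> {1..n} \<and> j \<in> {1..n} \<and> i \<noteq> j \<and> e = {i, j}}"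

definition is_matching :: "nat set set \<Rightarrow> bool" where
  "is_matching F \<longleftrightarrow> (\<forall>e\<in>F. \<forall>f\<in>F. e \<noteq> f \<longrightarrow> e \<inter> f = {})"

definition matching_number :: "nat set set \<Rightarrow> nat" where
  "matching_number E = Max (card ` {F. F \<subseteq> E \<and> is_matching F})"

text \<open>Probability that the binomial random graph G(n,q) on [n] (edge set E \<subseteq> all_pairs n,
  each pair present independently with probability q) satisfies P.\<close>
definition gnq_prob :: "nat \<Rightarrow> real \<Rightarrow> (nat set set \<Rightarrow> bool) \<Rightarrow> real" where
  "gnq_prob n q P =
     (\<Sum>E\<in>{E. E \<subseteq> all_pairs n \<and> P E}.
        q ^ card E * (1 - q) ^ (card (all_pairs n) - card E))"

end

theory Submission
  imports Defs "HOL-Real_Asymp.Real_Asymp"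
begin

(* Let T be the set of vertices whose component has at most two vertices and H the graph formed
   by the remaining edges. Conditionally on (T, H), the edges inside T form a matching m of T
   whose probability is proportional to (q / (1 - q)) ^ |m|, and the matching number is
   nu(H) + |m|. The numbers a_k of k-edge matchings of a t-set satisfy
   a_(k+1) (k + 1) = a_k C(t - 2k, 2); comparing consecutive weights a_k rho^k shows that the
   law of |m| is nearly flat on the s ~ e^-8 L / 16 values just below its mode, where
   L = n sqrt q e^(-qn). So every window of l + 1 consecutive values has conditional probability
   at most (l + 1) e^2 / (s + 1). The lower bound on |T| needed for this comes from the isolated
   vertices: by Chebyshev's inequality there are at least half of their expected number
   n (1 - q)^(n - 1) >= e^-8 n e^(-qn) of them, with probability 1 - O(1 / L + 1 / sqrt L). *)

section \<open>Binomial random subsets\<close>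

definition subset_weight :: "'a set \<Rightarrow> real \<Rightarrow> 'a set \<Rightarrow> real" where
  "subset_weight S q E = q ^ card E * (1 - q) ^ (card S - card E)"

lemma subset_weight_nonneg: "0 \<le> q \<Longrightarrow> q \<le> 1 \<Longrightarrow> 0 \<le> subset_weight S q E"
  unfolding subset_weight_def by simp

lemma sum_subset_weight_Pow:
  assumes "finite S"
  shows "(\<Sum>E\<in>Pow S. subset_weight S q E) = 1"
proof -
  have "1 = (\<Prod>x\<in>S. q + (1 - q))"
    by simp
  also have "\<dots> = (\<Sum>E\<in>Pow S. (\<Prod>x\<in>E. q) * (\<Prod>x\<in>S - E. 1 - q))"
    by (rule prod_add[OF assms])
  also have "\<dots> = (\<Sum>E\<in>Pow S. subset_weight S q E)"
    unfolding subset_weight_def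
    by (intro sum.cong refl) (auto simp: card_Diff_subset finite_subset[OF _ assms])
  finally show ?thesis ..
qed

lemma sum_subset_weight_avoiding:
  assumes "finite S" "A \<subseteq> S"
  shows "(\<Sum>E\<in>Pow S. subset_weight S q E * of_bool (E \<inter> A = {})) = (1 - q) ^ card A"
proof -
  have avoiding_eq: "Pow S \<inter> {E. E \<inter> A = {}} = Pow (S - A)"
    by auto
  have card_S: "card S = card (S - A) + card A"
    using assms by (simp add: card_Diff_subset card_mono finite_subset)
  have "(\<Sum>E\<in>Pow S. subset_weight S q E * of_bool (E \<inter> A = {}))
      = (\<Sum>E\<in>Pow (S - A). subset_weight S q E)"
    using assms(1) by (simp add: avoiding_eq)
  also have "\<dots> = (\<Sum>E\<in>Pow (S - A). (1 - q) ^ card A * subset_weight (S - A) q E)"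
  proof (intro sum.cong refl)
    fix E assume "E \<in> Pow (S - A)"
    then have "card E \<le> card (S - A)"
      using assms(1) by (auto intro: card_mono)
    then have "card S - card E = (card (S - A) - card E) + card A"
      using card_S by simp
    then show "subset_weight S q E = (1 - q) ^ card A * subset_weight (S - A) q E"
      by (simp add: subset_weight_def power_add)
  qed
  also have "\<dots> = (1 - q) ^ card A"
    using assms(1) by (simp add: sum_distrib_left[symmetric] sum_subset_weight_Pow)
  finally show ?thesis .
qed

lemma subset_weight_Un:
  assumes "finite S" "H \<subseteq> S" "m \<subseteq> S" "H \<inter> m = {}" "q < 1"
  shows "subset_weight S q (H \<union> m) = subset_weight S q H * (q / (1 - q)) ^ card m"
proof -
  have fin: "finite H" "finite m"
    using assms finite_subset by blast+
  have card_Un: "card (H \<union> m) = card H + card m"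
    using card_Un_disjoint[OF fin assms(4)] .
  moreover have "card H + card m \<le> card S"
    using card_Un card_mono[OF assms(1), of "H \<union> m"] assms(2,3) by simp
  ultimately have "card S - card H = (card S - card (H \<union> m)) + card m"
    by simp
  then show ?thesis
    using assms(5) unfolding subset_weight_def card_Un
    by (simp add: power_add field_simps)
qed

lemma sum_le_by_fibres:
  fixes w :: "'a \<Rightarrow> real" and \<phi> :: "'a \<Rightarrow> 'b"
  assumes "finite A"
    and fibre: "\<And>x. x \<in> A \<Longrightarrow>
      (\<Sum>y | y \<in> A \<and> \<phi> y = \<phi> x \<and> P y. w y) \<le> B * (\<Sum>y | y \<in> A \<and> \<phi> y = \<phi> x. w y)"
  shows "(\<Sum>x | x \<in> A \<and> P x. w x) \<le> B * (\<Sum>x\<in>A. w x)"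
proof -
  have "(\<Sum>x | x \<in> A \<and> P x. w x) = (\<Sum>r\<in>\<phi> ` A. \<Sum>y | y \<in> A \<and> \<phi> y = r \<and> P y. w y)"
    using assms(1) by (subst sum.group[symmetric, of _ "\<phi> ` A" \<phi>]) (auto intro!: sum.cong)
  also have "\<dots> \<le> (\<Sum>r\<in>\<phi> ` A. B * (\<Sum>y | y \<in> A \<and> \<phi> y = r. w y))"
    using fibre by (intro sum_mono) auto
  also have "\<dots> = B * (\<Sum>x\<in>A. w x)"
    unfolding sum_distrib_left[symmetric]
    using assms(1) by (subst sum.group[symmetric, of _ "\<phi> ` A" \<phi>]) (auto intro!: sum.cong)
  finally show ?thesis .
qed

lemma finite_all_pairs: "finite (all_pairs n)"
proof (rule finite_subset)
  show "all_pairs n \<subseteq> Pow {1..n}"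
    unfolding all_pairs_def by auto
qed simp

lemma all_pairs_iff: "e \<in> all_pairs n \<longleftrightarrow> e \<subseteq> {1..n} \<and> card e = 2"
  unfolding all_pairs_def card_2_iff by blast

lemma all_pairs_nonempty: "e \<in> all_pairs n \<Longrightarrow> e \<noteq> {}"
  unfolding all_pairs_def by auto

lemma all_pairs_edge_through:
  assumes "e \<in> all_pairs n" "x \<in> e"
  obtains a where "e = {x, a}"
proof -
  obtain i j where "e = {i, j}"
    using assms(1) unfolding all_pairs_def by blast
  then show ?thesis
    using that assms(2) by (metis insert_commute insertE singletonD)
qed

definition gnq_expectation :: "nat \<Rightarrow> real \<Rightarrow> (nat set set \<Rightarrow> real) \<Rightarrow> real" where
  "gnq_expectation n q f = (\<Sum>E\<in>Pow (all_pairs n). subset_weight (all_pairs n) q E * f E)"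

lemma gnq_prob_eq_expectation: "gnq_prob n q P = gnq_expectation n q (\<lambda>E. of_bool (P E))"
  unfolding gnq_prob_def gnq_expectation_def subset_weight_def by (simp add: finite_all_pairs Int_def)

lemma gnq_prob_le_1:
  assumes "0 \<le> q" "q \<le> 1"
  shows "gnq_prob n q P \<le> 1"
proof -
  have "gnq_prob n q P \<le> (\<Sum>E\<in>Pow (all_pairs n). subset_weight (all_pairs n) q E)"
    unfolding gnq_prob_eq_expectation gnq_expectation_def using assms
    by (intro sum_mono) (simp add: subset_weight_nonneg)
  then show ?thesis
    by (simp add: sum_subset_weight_Pow finite_all_pairs)
qed

lemma gnq_prob_union_bound:
  assumes "0 \<le> q" "q \<le> 1" "\<And>E. P E \<Longrightarrow> Q E \<or> R E"
  shows "gnq_prob n q P \<le> gnq_prob n q Q + gnq_prob n q R"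
  unfolding gnq_prob_eq_expectation gnq_expectation_def sum.distrib[symmetric] distrib_left[symmetric]
  using assms by (intro sum_mono mult_left_mono) (auto simp: subset_weight_nonneg)

lemma gnq_expectation_avoiding:
  "A \<subseteq> all_pairs n \<Longrightarrow> gnq_expectation n q (\<lambda>E. of_bool (E \<inter> A = {})) = (1 - q) ^ card A"
  unfolding gnq_expectation_def by (rule sum_subset_weight_avoiding[OF finite_all_pairs])

lemma gnq_expectation_sum:
  "gnq_expectation n q (\<lambda>E. \<Sum>i\<in>I. f i E) = (\<Sum>i\<in>I. gnq_expectation n q (f i))"
  unfolding gnq_expectation_def by (simp add: sum_distrib_left sum.swap[of _ I])

section \<open>Isolated vertices\<close>

definition star :: "nat \<Rightarrow> nat \<Rightarrow> nat set set" where
  "star n v = {e \<in> all_pairs n. v \<in> e}"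

definition isolated_vertices :: "nat \<Rightarrow> nat set set \<Rightarrow> nat set" where
  "isolated_vertices n E = {v \<in> {1..n}. \<forall>e\<in>E. v \<notin> e}"

lemma star_subset_all_pairs: "star n v \<subseteq> all_pairs n"
  unfolding star_def by auto

lemma card_star:
  assumes "v \<in> {1..n}"
  shows "card (star n v) = n - 1"
proof -
  have "star n v = (\<lambda>j. {v, j}) ` ({1..n} - {v})"
    using assms unfolding star_def all_pairs_def by (auto 0 4)
  moreover have "inj_on (\<lambda>j. {v, j}) ({1..n} - {v})"
    by (auto simp: inj_on_def doubleton_eq_iff)
  ultimately show ?thesis
    using assms by (simp add: card_image)
qed

lemma card_star_Un_star:
  assumes "u \<in> {1..n}" "v \<in> {1..n}" "u \<noteq> v"
  shows "card (star n u \<union> star n v) = 2 * n - 3"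
proof -
  have "star n u \<inter> star n v = {{u, v}}"
    using assms unfolding star_def all_pairs_def by (auto simp: doubleton_eq_iff)
  moreover have "card (star n u) + card (star n v)
      = card (star n u \<union> star n v) + card (star n u \<inter> star n v)"
    by (rule card_Un_Int) (auto intro: finite_subset[OF star_subset_all_pairs finite_all_pairs])
  moreover have "n \<ge> 2"
    using assms by auto
  ultimately show ?thesis
    using card_star assms by simp
qed

lemma card_isolated_vertices_eq_sum:
  assumes "E \<subseteq> all_pairs n"
  shows "real (card (isolated_vertices n E)) = (\<Sum>v\<in>{1..n}. of_bool (E \<inter> star n v = {}))"
proof -
  have "isolated_vertices n E = {1..n} \<inter> {v. E \<inter> star n v = {}}"
    using assms unfolding isolated_vertices_def star_def by auto
  then show ?thesis
    by simp
qed

lemma expectation_isolated_vertices: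
  "gnq_expectation n q (\<lambda>E. real (card (isolated_vertices n E))) = real n * (1 - q) ^ (n - 1)"
proof -
  have "gnq_expectation n q (\<lambda>E. real (card (isolated_vertices n E)))
      = gnq_expectation n q (\<lambda>E. \<Sum>v\<in>{1..n}. of_bool (E \<inter> star n v = {}))"
    unfolding gnq_expectation_def
    by (rule sum.cong[OF refl]) (simp only: card_isolated_vertices_eq_sum Pow_iff)
  also have "\<dots> = (\<Sum>v\<in>{1..n}. (1 - q) ^ (n - 1))"
    unfolding gnq_expectation_sum
    by (intro sum.cong refl) (simp add: gnq_expectation_avoiding star_subset_all_pairs card_star)
  finally show ?thesis
    by simp
qed

lemma expectation_isolated_vertices_squared:
  "gnq_expectation n q (\<lambda>E. real (card (isolated_vertices n E)) ^ 2)
     = real n * (1 - q) ^ (n - 1) + real n * (real n - 1) * (1 - q) ^ (2 * n - 3)"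
proof -
  have square: "real (card (isolated_vertices n E)) ^ 2
      = (\<Sum>u\<in>{1..n}. \<Sum>v\<in>{1..n}. of_bool (E \<inter> (star n u \<union> star n v) = {}))"
    if "E \<subseteq> all_pairs n" for E
  proof -
    have "real (card (isolated_vertices n E)) ^ 2
        = (\<Sum>u\<in>{1..n}. of_bool (E \<inter> star n u = {})) * (\<Sum>v\<in>{1..n}. of_bool (E \<inter> star n v = {}))"
      by (simp only: card_isolated_vertices_eq_sum[OF that] power2_eq_square)
    also have "\<dots> = (\<Sum>u\<in>{1..n}. \<Sum>v\<in>{1..n}. of_bool (E \<inter> star n u = {}) * of_bool (E \<inter> star n v = {}))"
      by (rule sum_product)
    also have "\<dots> = (\<Sum>u\<in>{1..n}. \<Sum>v\<in>{1..n}. of_bool (E \<inter> (star n u \<union> star n v) = {}))"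
      by (intro sum.cong refl) (auto simp: Int_Un_distrib)
    finally show ?thesis .
  qed
  have "gnq_expectation n q (\<lambda>E. real (card (isolated_vertices n E)) ^ 2)
      = gnq_expectation n q (\<lambda>E. \<Sum>u\<in>{1..n}. \<Sum>v\<in>{1..n}. of_bool (E \<inter> (star n u \<union> star n v) = {}))"
    unfolding gnq_expectation_def by (rule sum.cong[OF refl]) (simp only: square Pow_iff)
  also have "\<dots> = (\<Sum>u\<in>{1..n}. \<Sum>v\<in>{1..n}.
                    if u = v then (1 - q) ^ (n - 1) else (1 - q) ^ (2 * n - 3))"
    unfolding gnq_expectation_sum
    by (intro sum.cong refl)
      (simp add: gnq_expectation_avoiding star_subset_all_pairs card_star card_star_Un_star)
  also have "\<dots> = (\<Sum>u\<in>{1..n}. (1 - q) ^ (n - 1) + (real n - 1) * (1 - q) ^ (2 * n - 3))"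
  proof (intro sum.cong refl)
    fix u assume u: "u \<in> {1..n}"
    let ?f = "\<lambda>v. if u = v then (1 - q) ^ (n - 1) else (1 - q :: real) ^ (2 * n - 3)"
    have "sum ?f {1..n} = ?f u + sum ?f ({1..n} - {u})"
      using u by (intro sum.remove) auto
    also have "sum ?f ({1..n} - {u}) = (real n - 1) * (1 - q) ^ (2 * n - 3)"
      using u by simp
    finally show "sum ?f {1..n} = (1 - q) ^ (n - 1) + (real n - 1) * (1 - q) ^ (2 * n - 3)"
      by simp
  qed
  finally show ?thesis
    by (simp add: algebra_simps)
qed

lemma chebyshev_below_half_mean:
  fixes w Z :: "'a \<Rightarrow> real"
  assumes "finite A" "\<And>x. x \<in> A \<Longrightarrow> 0 \<le> w x" "sum w A = 1"
    and mean: "(\<Sum>x\<in>A. w x * Z x) = \<mu>" and "\<mu> > 0"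
  shows "(\<Sum>x\<in>A. w x * of_bool (Z x < \<mu> / 2)) \<le> 4 * ((\<Sum>x\<in>A. w x * Z x ^ 2) - \<mu>\<^sup>2) / \<mu>\<^sup>2"
proof -
  have indicator_le: "of_bool (Z x < \<mu> / 2) \<le> 4 / \<mu>\<^sup>2 * (Z x - \<mu>)\<^sup>2" for x
  proof (cases "Z x < \<mu> / 2")
    case True
    then have "(\<mu> / 2)\<^sup>2 \<le> (\<mu> - Z x)\<^sup>2"
      using \<open>\<mu> > 0\<close> by (intro power_mono) auto
    with \<open>\<mu> > 0\<close> show ?thesis
      by (simp add: field_simps power2_commute[of \<mu>])
  qed simp
  have "(\<Sum>x\<in>A. w x * of_bool (Z x < \<mu> / 2)) \<le> (\<Sum>x\<in>A. w x * (4 / \<mu>\<^sup>2 * (Z x - \<mu>)\<^sup>2))"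
    using assms(2) by (intro sum_mono mult_left_mono indicator_le)
  also have "\<dots> = 4 / \<mu>\<^sup>2 * (\<Sum>x\<in>A. w x * Z x ^ 2 - 2 * \<mu> * (w x * Z x) + \<mu>\<^sup>2 * w x)"
    by (simp add: sum_distrib_left power2_diff algebra_simps)
  also have "\<dots> = 4 / \<mu>\<^sup>2 * ((\<Sum>x\<in>A. w x * Z x ^ 2) - 2 * \<mu> * (\<Sum>x\<in>A. w x * Z x) + \<mu>\<^sup>2 * sum w A)"
    by (simp add: sum.distrib sum_subtractf sum_distrib_left)
  also have "\<dots> = 4 * ((\<Sum>x\<in>A. w x * Z x ^ 2) - \<mu>\<^sup>2) / \<mu>\<^sup>2"
    by (simp add: mean assms(3) power2_eq_square)
  finally show ?thesis .
qed

lemma gnq_prob_few_isolated_vertices: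
  assumes "0 \<le> q" "q < 1" "n \<ge> 2"
  defines "\<mu> \<equiv> real n * (1 - q) ^ (n - 1)"
  shows "gnq_prob n q (\<lambda>E. real (card (isolated_vertices n E)) < \<mu> / 2) \<le> 4 / \<mu> + 4 * q / (1 - q)"
proof -
  have \<mu>_pos: "\<mu> > 0"
    using assms unfolding \<mu>_def by simp
  have power_eq: "(1 - q) ^ (2 * n - 3) = ((1 - q) ^ (n - 1))\<^sup>2 / (1 - q)"
  proof -
    have "2 * n - 3 + 1 = 2 * (n - 1)"
      using assms(3) by simp
    then have "(1 - q) ^ (2 * n - 3) * (1 - q) = ((1 - q) ^ (n - 1))\<^sup>2"
      by (metis power_Suc2 Suc_eq_plus1 power_mult mult.commute)
    then show ?thesis
      using assms(2) by (simp add: field_simps)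
  qed
  have variance_le: "\<mu> + real n * (real n - 1) * (1 - q) ^ (2 * n - 3) - \<mu>\<^sup>2 \<le> \<mu> + \<mu>\<^sup>2 * (q / (1 - q))"
  proof -
    have "real n * (real n - 1) * (1 - q) ^ (2 * n - 3) \<le> real n * real n * (1 - q) ^ (2 * n - 3)"
      using assms(1,2) by (intro mult_right_mono mult_left_mono) auto
    also have "\<dots> = \<mu>\<^sup>2 + \<mu>\<^sup>2 * (q / (1 - q))"
      using assms(2) unfolding power_eq \<mu>_def by (simp add: field_simps power2_eq_square)
    finally show ?thesis
      by simp
  qed
  have "gnq_prob n q (\<lambda>E. real (card (isolated_vertices n E)) < \<mu> / 2)
      \<le> 4 * (gnq_expectation n q (\<lambda>E. real (card (isolated_vertices n E)) ^ 2) - \<mu>\<^sup>2) / \<mu>\<^sup>2"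
    unfolding gnq_prob_eq_expectation gnq_expectation_def
    by (rule chebyshev_below_half_mean)
      (use assms \<mu>_pos expectation_isolated_vertices[of n q] in
        \<open>auto simp: finite_all_pairs sum_subset_weight_Pow subset_weight_nonneg gnq_expectation_def\<close>)
  also have "\<dots> = 4 * ((\<mu> + real n * (real n - 1) * (1 - q) ^ (2 * n - 3)) - \<mu>\<^sup>2) / \<mu>\<^sup>2"
    unfolding expectation_isolated_vertices_squared \<mu>_def ..
  also have "\<dots> \<le> 4 * (\<mu> + \<mu>\<^sup>2 * (q / (1 - q))) / \<mu>\<^sup>2"
    using variance_le by (intro divide_right_mono mult_left_mono) auto
  also have "\<dots> = 4 / \<mu> + 4 * q / (1 - q)"
    using \<mu>_pos by (simp add: field_simps power2_eq_square)
  finally show ?thesis .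
qed

section \<open>Matchings\<close>

lemma is_matching_subset: "is_matching F \<Longrightarrow> G \<subseteq> F \<Longrightarrow> is_matching G"
  unfolding is_matching_def by blast

lemma is_matching_Un:
  assumes "is_matching F" "is_matching G" "\<And>e f. e \<in> F \<Longrightarrow> f \<in> G \<Longrightarrow> e \<inter> f = {}"
  shows "is_matching (F \<union> G)"
  unfolding is_matching_def
proof (intro ballI impI)
  fix e f assume e: "e \<in> F \<union> G" and f: "f \<in> F \<union> G" and "e \<noteq> f"
  consider "e \<in> F" "f \<in> F" | "e \<in> F" "f \<in> G" | "e \<in> G" "f \<in> F" | "e \<in> G" "f \<in> G"
    using e f by blast
  then show "e \<inter> f = {}"
    using assms \<open>e \<noteq> f\<close> unfolding is_matching_def
    by cases (meson, meson, metis Int_commute, meson)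
qed

lemma is_matching_edge_unique:
  assumes "is_matching m" "{x, a} \<in> m" "{x, b} \<in> m"
  shows "a = b"
proof -
  have "{x, a} \<inter> {x, b} \<noteq> {}"
    by simp
  then have "{x, a} = {x, b}"
    using assms unfolding is_matching_def by meson
  then show ?thesis
    by (metis doubleton_eq_iff)
qed

lemma matching_number_attained:
  assumes "finite E"
  obtains F where "F \<subseteq> E" "is_matching F" "card F = matching_number E"
proof -
  have "{} \<in> {F. F \<subseteq> E \<and> is_matching F}"
    by (simp add: is_matching_def)
  then have "matching_number E \<in> card ` {F. F \<subseteq> E \<and> is_matching F}"
    unfolding matching_number_def using assms by (intro Max_in) auto
  then show ?thesis
    using that by auto
qed

lemma card_le_matching_number:
  assumes "finite E" "F \<subseteq> E" "is_matching F"
  shows "card F \<le> matching_number E"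
  unfolding matching_number_def using assms by (intro Max_ge) auto

lemma matching_number_Un_disjoint_matching:
  assumes "finite H" "finite m" "is_matching m" "H \<inter> m = {}"
    and disjoint: "\<And>e f. e \<in> H \<Longrightarrow> f \<in> m \<Longrightarrow> e \<inter> f = {}"
  shows "matching_number (H \<union> m) = matching_number H + card m"
proof (rule antisym)
  obtain F where F: "F \<subseteq> H \<union> m" "is_matching F" "card F = matching_number (H \<union> m)"
    using assms(1,2) matching_number_attained[of "H \<union> m"] by blast
  have "F = (F \<inter> H) \<union> (F \<inter> m)"
    using F(1) by blast
  then have "card F \<le> card (F \<inter> H) + card (F \<inter> m)"
    by (metis card_Un_le)
  also have "card (F \<inter> H) \<le> matching_number H"
    using assms(1) is_matching_subset[OF F(2)] by (intro card_le_matching_number) auto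
  also have "card (F \<inter> m) \<le> card m"
    using assms(2) by (intro card_mono) auto
  finally show "matching_number (H \<union> m) \<le> matching_number H + card m"
    using F(3) by simp
next
  obtain F where F: "F \<subseteq> H" "is_matching F" "card F = matching_number H"
    by (rule matching_number_attained[OF assms(1)])
  have "is_matching (F \<union> m)"
    using F(1,2) assms(3) disjoint by (intro is_matching_Un) auto
  moreover have "card (F \<union> m) = matching_number H + card m"
    using F assms(1,2,4) by (subst card_Un_disjoint) (auto intro: finite_subset)
  moreover have "F \<union> m \<subseteq> H \<union> m"
    using F(1) by blast
  ultimately show "matching_number H + card m \<le> matching_number (H \<union> m)"
    using assms(1,2) card_le_matching_number[of "H \<union> m" "F \<union> m"] by simp
qed

definition matchings_on :: "nat \<Rightarrow> nat set \<Rightarrow> nat set set set" where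
  "matchings_on n T = {m. m \<subseteq> all_pairs n \<and> (\<forall>e\<in>m. e \<subseteq> T) \<and> is_matching m}"

lemma finite_matchings_on: "finite (matchings_on n T)"
  unfolding matchings_on_def
  by (rule finite_subset[of _ "Pow (all_pairs n)"]) (auto simp: finite_all_pairs)

lemma matching_on_subset_all_pairs: "m \<in> matchings_on n T \<Longrightarrow> m \<subseteq> all_pairs n"
  unfolding matchings_on_def by blast

lemma matching_on_edge_subset: "m \<in> matchings_on n T \<Longrightarrow> e \<in> m \<Longrightarrow> e \<subseteq> T"
  unfolding matchings_on_def by blast

lemma matching_on_is_matching: "m \<in> matchings_on n T \<Longrightarrow> is_matching m"
  unfolding matchings_on_def by blast

lemma finite_matching_on: "m \<in> matchings_on n T \<Longrightarrow> finite m"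
  using finite_subset[OF matching_on_subset_all_pairs finite_all_pairs] .

lemma card_edge_matching_on: "m \<in> matchings_on n T \<Longrightarrow> e \<in> m \<Longrightarrow> card e = 2"
  using matching_on_subset_all_pairs all_pairs_iff by blast

lemma card_Union_matching_on:
  assumes "m \<in> matchings_on n T"
  shows "card (\<Union>m) = 2 * card m"
proof -
  have "pairwise disjnt m"
    using matching_on_is_matching[OF assms] unfolding is_matching_def pairwise_def disjnt_def by blast
  moreover have "finite e" if "e \<in> m" for e
    using card_edge_matching_on[OF assms that] card_ge_0_finite by force
  ultimately have "card (\<Union>m) = sum card m"
    by (rule card_Union_disjoint)
  then show ?thesis
    using card_edge_matching_on[OF assms] by simp
qed

lemma card_matching_on_le:
  assumes "m \<in> matchings_on n T" "finite T"
  shows "card m \<le> card T"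
proof -
  have "card (\<Union>m) \<le> card T"
    using assms matching_on_edge_subset[OF assms(1)] by (intro card_mono) auto
  then show ?thesis
    using card_Union_matching_on[OF assms(1)] by simp
qed

lemma disjoint_from_matching_on:
  assumes H: "H \<subseteq> all_pairs n" "\<And>e. e \<in> H \<Longrightarrow> e \<inter> T = {}" and m: "m \<in> matchings_on n T"
  shows "\<And>e f. e \<in> H \<Longrightarrow> f \<in> m \<Longrightarrow> e \<inter> f = {}" "H \<inter> m = {}"
proof -
  show edges_disjoint: "e \<inter> f = {}" if "e \<in> H" "f \<in> m" for e f
    using H(2)[OF that(1)] matching_on_edge_subset[OF m that(2)] by blast
  show "H \<inter> m = {}"
  proof (rule ccontr)
    assume "H \<inter> m \<noteq> {}"
    then obtain e where "e \<in> H" "e \<in> m"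
      by blast
    then have "e = {}"
      using edges_disjoint[of e e] by simp
    then show False
      using all_pairs_nonempty H(1) \<open>e \<in> H\<close> by blast
  qed
qed

lemma matching_number_Un_matching_on:
  assumes "H \<subseteq> all_pairs n" "\<And>e. e \<in> H \<Longrightarrow> e \<inter> T = {}" and m: "m \<in> matchings_on n T"
  shows "matching_number (H \<union> m) = matching_number H + card m"
  using disjoint_from_matching_on[OF assms] finite_subset[OF assms(1) finite_all_pairs]
    finite_matching_on[OF m] matching_on_is_matching[OF m]
  by (intro matching_number_Un_disjoint_matching) auto

lemma subset_weight_Un_matching_on:
  assumes "H \<subseteq> all_pairs n" "\<And>e. e \<in> H \<Longrightarrow> e \<inter> T = {}" and m: "m \<in> matchings_on n T"
    and "q < 1"
  shows "subset_weight (all_pairs n) q (H \<union> m) = subset_weight (all_pairs n) q H * (q / (1 - q)) ^ card m"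
  using disjoint_from_matching_on(2)[OF assms(1-3)] assms(1,4) matching_on_subset_all_pairs[OF m]
  by (intro subset_weight_Un finite_all_pairs)

definition matchings_of_size :: "nat \<Rightarrow> nat set \<Rightarrow> nat \<Rightarrow> nat set set set" where
  "matchings_of_size n T k = {m \<in> matchings_on n T. card m = k}"

lemma matchings_of_size_0: "matchings_of_size n T 0 = {{}}"
  unfolding matchings_of_size_def matchings_on_def is_matching_def
  using finite_subset[OF _ finite_all_pairs] by auto

lemma finite_matchings_of_size: "finite (matchings_of_size n T k)"
  unfolding matchings_of_size_def using finite_matchings_on by simp

lemma insert_edge_matching_on:
  assumes T: "T \<subseteq> {1..n}" and m: "m \<in> matchings_on n T" and e: "e \<subseteq> T - \<Union>m" "card e = 2"
  shows "insert e m \<in> matchings_on n T" "e \<notin> m"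
proof -
  have "e \<in> all_pairs n"
    using e T all_pairs_iff by blast
  moreover have "is_matching (insert e m)"
    using is_matching_Un[of "{e}" m] matching_on_is_matching[OF m] e(1)
    by (auto simp: is_matching_def)
  ultimately show "insert e m \<in> matchings_on n T"
    using m e(1) unfolding matchings_on_def by auto
  have "e \<noteq> {}"
    using e(2) by auto
  then show "e \<notin> m"
    using e(1) by blast
qed

lemma remove_edge_matching_on:
  assumes m: "m \<in> matchings_on n T" and e: "e \<in> m"
  shows "m - {e} \<in> matchings_on n T" "e \<subseteq> T - \<Union>(m - {e})" "card e = 2"
proof -
  show "m - {e} \<in> matchings_on n T"
    using m is_matching_subset[OF matching_on_is_matching[OF m]] unfolding matchings_on_def by auto
  have "e \<inter> \<Union>(m - {e}) = {}"
    using matching_on_is_matching[OF m] e unfolding is_matching_def by blast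
  then show "e \<subseteq> T - \<Union>(m - {e})"
    using matching_on_edge_subset[OF m e] by blast
  show "card e = 2"
    using card_edge_matching_on[OF m e] .
qed

lemma bij_betw_remove_edge:
  assumes T: "T \<subseteq> {1..n}"
  shows "bij_betw (\<lambda>(m, e). (m - {e}, e)) (SIGMA m:matchings_of_size n T (Suc k). m)
           (SIGMA m:matchings_of_size n T k. {e. e \<subseteq> T - \<Union>m \<and> card e = 2})"
    (is "bij_betw ?f ?X ?Y")
proof (rule bij_betw_byWitness[where f' = "\<lambda>(m, e). (insert e m, e)"])
  show "\<forall>a\<in>?X. (\<lambda>(m, e). (insert e m, e)) (?f a) = a"
    by auto
  show "\<forall>a\<in>?Y. ?f ((\<lambda>(m, e). (insert e m, e)) a) = a"
    unfolding matchings_of_size_def using insert_edge_matching_on(2)[OF T] by auto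
  show "?f ` ?X \<subseteq> ?Y"
  proof
    fix p assume "p \<in> ?f ` ?X"
    then obtain m e where m: "m \<in> matchings_on n T" "card m = Suc k" "e \<in> m" and p: "p = (m - {e}, e)"
      unfolding matchings_of_size_def by auto
    then have "card (m - {e}) = k"
      using finite_matching_on by simp
    then show "p \<in> ?Y"
      using remove_edge_matching_on[OF m(1,3)] unfolding p matchings_of_size_def by simp
  qed
  show "(\<lambda>(m, e). (insert e m, e)) ` ?Y \<subseteq> ?X"
  proof
    fix p assume "p \<in> (\<lambda>(m, e). (insert e m, e)) ` ?Y"
    then obtain m e where m: "m \<in> matchings_on n T" "card m = k"
      and e: "e \<subseteq> T - \<Union>m" "card e = 2" and p: "p = (insert e m, e)"
      unfolding matchings_of_size_def by auto
    then have "card (insert e m) = Suc k"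
      using finite_matching_on insert_edge_matching_on(2)[OF T m(1) e] by simp
    then show "p \<in> ?X"
      using insert_edge_matching_on(1)[OF T m(1) e] unfolding p matchings_of_size_def by simp
  qed
qed

lemma card_matchings_of_size_Suc:
  assumes T: "T \<subseteq> {1..n}"
  shows "card (matchings_of_size n T (Suc k)) * Suc k
       = card (matchings_of_size n T k) * ((card T - 2 * k) choose 2)"
proof -
  have fin_T: "finite T"
    using T finite_subset by blast
  have "card (matchings_of_size n T (Suc k)) * Suc k = (\<Sum>m\<in>matchings_of_size n T (Suc k). card m)"
    by (simp add: matchings_of_size_def)
  also have "\<dots> = card (SIGMA m:matchings_of_size n T (Suc k). m)"
    using finite_matchings_of_size finite_matching_on
    by (intro card_SigmaI[symmetric]) (auto simp: matchings_of_size_def)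
  also have "\<dots> = card (SIGMA m:matchings_of_size n T k. {e. e \<subseteq> T - \<Union>m \<and> card e = 2})"
    using bij_betw_remove_edge[OF T] by (rule bij_betw_same_card)
  also have "\<dots> = (\<Sum>m\<in>matchings_of_size n T k. card {e. e \<subseteq> T - \<Union>m \<and> card e = 2})"
    using finite_matchings_of_size fin_T by (intro card_SigmaI) auto
  also have "\<dots> = (\<Sum>m\<in>matchings_of_size n T k. (card T - 2 * k) choose 2)"
  proof (intro sum.cong refl)
    fix m assume "m \<in> matchings_of_size n T k"
    then have m: "m \<in> matchings_on n T" "card m = k"
      unfolding matchings_of_size_def by auto
    have "\<Union>m \<subseteq> T"
      using matching_on_edge_subset[OF m(1)] by blast
    then have "card (T - \<Union>m) = card T - 2 * k"
      using card_Diff_subset[OF finite_subset[OF _ fin_T]] card_Union_matching_on[OF m(1)] m(2) by simp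
    then show "card {e. e \<subseteq> T - \<Union>m \<and> card e = 2} = (card T - 2 * k) choose 2"
      using n_subsets[of "T - \<Union>m" 2] fin_T by simp
  qed
  finally show ?thesis
    by simp
qed

lemma sum_matchings_on_by_size:
  fixes f :: "nat \<Rightarrow> real"
  assumes "finite T"
  shows "(\<Sum>m\<in>matchings_on n T. f (card m)) = (\<Sum>k\<le>card T. real (card (matchings_of_size n T k)) * f k)"
proof -
  have "(\<Sum>m\<in>matchings_on n T. f (card m)) = (\<Sum>k\<le>card T. \<Sum>m\<in>matchings_of_size n T k. f (card m))"
    unfolding matchings_of_size_def
    using card_matching_on_le[OF _ assms] finite_matchings_on by (intro sum.group[symmetric]) auto
  also have "\<dots> = (\<Sum>k\<le>card T. real (card (matchings_of_size n T k)) * f k)"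
    by (intro sum.cong refl) (simp add: matchings_of_size_def)
  finally show ?thesis .
qed

lemma sum_matchings_on_core_Un:
  fixes f :: "nat \<Rightarrow> real"
  assumes T: "finite T" and H: "H \<subseteq> all_pairs n" "\<And>e. e \<in> H \<Longrightarrow> e \<inter> T = {}" and "q < 1"
  shows "(\<Sum>m\<in>matchings_on n T. subset_weight (all_pairs n) q (H \<union> m) * f (card m))
       = subset_weight (all_pairs n) q H
           * (\<Sum>k\<le>card T. real (card (matchings_of_size n T k)) * ((q / (1 - q)) ^ k * f k))"
proof -
  have "(\<Sum>m\<in>matchings_on n T. subset_weight (all_pairs n) q (H \<union> m) * f (card m))
      = subset_weight (all_pairs n) q H * (\<Sum>m\<in>matchings_on n T. (q / (1 - q)) ^ card m * f (card m))"
    unfolding sum_distrib_left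
    by (intro sum.cong refl) (simp add: subset_weight_Un_matching_on[OF H _ \<open>q < 1\<close>])
  then show ?thesis
    using sum_matchings_on_by_size[OF T, where f = "\<lambda>k. (q / (1 - q)) ^ k * f k" and n = n] by simp
qed

section \<open>Components with at most two vertices\<close>

(* v is isolated or an endpoint of an isolated edge *)
definition small_component :: "nat set set \<Rightarrow> nat \<Rightarrow> bool" where
  "small_component E v \<longleftrightarrow>
     (\<forall>u. {v, u} \<in> E \<longrightarrow>
        (\<forall>w. {v, w} \<in> E \<longrightarrow> w = u) \<and> (\<forall>w. {u, w} \<in> E \<longrightarrow> w = v))"

definition small_vertices :: "nat \<Rightarrow> nat set set \<Rightarrow> nat set" where
  "small_vertices n E = {v \<in> {1..n}. small_component E v}"

definition core_edges :: "nat \<Rightarrow> nat set set \<Rightarrow> nat set set" where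
  "core_edges n E = {e \<in> E. e \<inter> small_vertices n E = {}}"

lemma isolated_vertices_subset_small_vertices: "isolated_vertices n E \<subseteq> small_vertices n E"
  unfolding isolated_vertices_def small_vertices_def small_component_def by auto

lemma card_isolated_vertices_le_small_vertices:
  "card (isolated_vertices n E) \<le> card (small_vertices n E)"
  by (rule card_mono[OF _ isolated_vertices_subset_small_vertices]) (simp add: small_vertices_def)

lemma small_component_neighbour:
  assumes "small_component E i" "{i, j} \<in> E"
  shows "small_component E j"
  using assms unfolding small_component_def by (metis insert_commute)

lemma edge_subset_or_disjoint_small_vertices:
  assumes "E \<subseteq> all_pairs n" "e \<in> E"
  shows "e \<subseteq> small_vertices n E \<or> e \<inter> small_vertices n E = {}"
proof -
  obtain i j where ij: "i \<in> {1..n}" "j \<in> {1..n}" "e = {i, j}"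
    using assms unfolding all_pairs_def by blast
  have "small_component E i \<longleftrightarrow> small_component E j"
    using assms(2) small_component_neighbour[of E i j] small_component_neighbour[of E j i]
    unfolding ij by (auto simp: insert_commute)
  then show ?thesis
    using ij unfolding small_vertices_def by auto
qed

lemma small_edges_in_matchings_on:
  assumes "E \<subseteq> all_pairs n"
  shows "{e \<in> E. e \<subseteq> small_vertices n E} \<in> matchings_on n (small_vertices n E)"
  unfolding matchings_on_def is_matching_def
proof (intro CollectI conjI ballI impI)
  fix e f
  assume e: "e \<in> {e \<in> E. e \<subseteq> small_vertices n E}" and f: "f \<in> {e \<in> E. e \<subseteq> small_vertices n E}"
    and "e \<noteq> f"
  show "e \<inter> f = {}"
  proof (rule ccontr)
    assume "e \<inter> f \<noteq> {}"
    then obtain x where "x \<in> e" "x \<in> f"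
      by blast
    then obtain a b where ab: "e = {x, a}" "f = {x, b}"
      using e f assms all_pairs_edge_through by (metis (no_types, lifting) mem_Collect_eq subsetD)
    have "small_component E x"
      using e \<open>x \<in> e\<close> unfolding small_vertices_def by blast
    then have "b = a"
      using e f unfolding ab small_component_def by blast
    then show False
      using ab \<open>e \<noteq> f\<close> by simp
  qed
qed (use assms in auto)

lemma core_edges_Un_small_edges:
  assumes "E \<subseteq> all_pairs n"
  shows "E = core_edges n E \<union> {e \<in> E. e \<subseteq> small_vertices n E}"
  using edge_subset_or_disjoint_small_vertices[OF assms] unfolding core_edges_def by blast

lemma core_edge_iff:
  assumes "E \<subseteq> all_pairs n" "e \<in> E"
  shows "e \<in> core_edges n E \<longleftrightarrow> \<not> e \<subseteq> small_vertices n E"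
  using edge_subset_or_disjoint_small_vertices[OF assms] all_pairs_nonempty[of e n] assms
  unfolding core_edges_def by blast

lemma core_edges_Int_matching_on:
  assumes "m \<in> matchings_on n (small_vertices n E)"
  shows "core_edges n E \<inter> m = {}"
  using assms all_pairs_nonempty matching_on_edge_subset matching_on_subset_all_pairs
  unfolding core_edges_def by blast

lemma small_vertices_subset_core_Un_matching:
  assumes m: "m \<in> matchings_on n (small_vertices n E)"
  shows "small_vertices n E \<subseteq> small_vertices n (core_edges n E \<union> m)"
proof
  let ?T = "small_vertices n E" and ?E' = "core_edges n E \<union> m"
  have in_m: "{x, y} \<in> m" if "x \<in> ?T" "{x, y} \<in> ?E'" for x y
    using that unfolding core_edges_def by blast
  fix v assume v: "v \<in> ?T"
  have "small_component ?E' v"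
    unfolding small_component_def
  proof (intro allI impI conjI)
    fix u w assume "{v, u} \<in> ?E'"
    then have vu: "{v, u} \<in> m"
      using in_m v by blast
    then have uv: "{u, v} \<in> m" and u: "u \<in> ?T"
      using matching_on_edge_subset[OF m] by (auto simp: insert_commute)
    show "w = u" if "{v, w} \<in> ?E'"
      using is_matching_edge_unique[OF matching_on_is_matching[OF m] vu in_m[OF v that]] by simp
    show "w = v" if "{u, w} \<in> ?E'"
      using is_matching_edge_unique[OF matching_on_is_matching[OF m] uv in_m[OF u that]] by simp
  qed
  then show "v \<in> small_vertices n ?E'"
    using v unfolding small_vertices_def by blast
qed

lemma small_vertices_core_Un_matching_subset:
  assumes E: "E \<subseteq> all_pairs n"
  shows "small_vertices n (core_edges n E \<union> m) \<subseteq> small_vertices n E"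
proof
  let ?T = "small_vertices n E" and ?E' = "core_edges n E \<union> m"
  fix v assume v: "v \<in> small_vertices n ?E'"
  show "v \<in> ?T"
  proof (rule ccontr)
    assume v_notin: "v \<notin> ?T"
    have outside_in_E': "e \<in> ?E'" if "e \<in> E" "\<not> e \<subseteq> ?T" for e
      using core_edge_iff[OF E that(1)] that(2) by blast
    have "\<not> small_component E v"
      using v v_notin unfolding small_vertices_def by blast
    then obtain u where vu: "{v, u} \<in> E"
      and other: "(\<exists>w. {v, w} \<in> E \<and> w \<noteq> u) \<or> (\<exists>w. {u, w} \<in> E \<and> w \<noteq> v)"
      unfolding small_component_def by blast
    have u_notin: "u \<notin> ?T"
      using edge_subset_or_disjoint_small_vertices[OF E vu] v_notin by blast
    have "(\<exists>w. {v, w} \<in> ?E' \<and> w \<noteq> u) \<or> (\<exists>w. {u, w} \<in> ?E' \<and> w \<noteq> v)"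
      using other outside_in_E' v_notin u_notin by blast
    moreover have "{v, u} \<in> ?E'"
      using outside_in_E'[OF vu] v_notin by blast
    ultimately have "\<not> small_component ?E' v"
      unfolding small_component_def by blast
    then show False
      using v unfolding small_vertices_def by blast
  qed
qed

lemma small_vertices_core_Un_matching:
  assumes "E \<subseteq> all_pairs n" "m \<in> matchings_on n (small_vertices n E)"
  shows "small_vertices n (core_edges n E \<union> m) = small_vertices n E"
  using small_vertices_subset_core_Un_matching[OF assms(2)] small_vertices_core_Un_matching_subset[OF assms(1)]
  by (rule antisym[rotated])

lemma core_edges_core_Un_matching:
  assumes E: "E \<subseteq> all_pairs n" and m: "m \<in> matchings_on n (small_vertices n E)"
  shows "core_edges n (core_edges n E \<union> m) = core_edges n E"
proof -
  have "e \<inter> small_vertices n E \<noteq> {}" if "e \<in> m" for e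
    using that all_pairs_nonempty matching_on_edge_subset[OF m] matching_on_subset_all_pairs[OF m]
    by (metis Int_absorb2 subsetD)
  then show ?thesis
    unfolding core_edges_def[of n "core_edges n E \<union> m"] small_vertices_core_Un_matching[OF assms]
    unfolding core_edges_def by blast
qed

lemma gnq_fibre_eq_image:
  assumes "E0 \<subseteq> all_pairs n"
  shows "{E. E \<subseteq> all_pairs n \<and> small_vertices n E = small_vertices n E0 \<and> core_edges n E = core_edges n E0}
           = (\<lambda>m. core_edges n E0 \<union> m) ` matchings_on n (small_vertices n E0)"
    (is "?F = ?I")
proof
  show "?F \<subseteq> ?I"
  proof
    fix E assume "E \<in> ?F"
    then have E: "E \<subseteq> all_pairs n" "small_vertices n E = small_vertices n E0"
      "core_edges n E = core_edges n E0"
      by auto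
    have "E = core_edges n E0 \<union> {e \<in> E. e \<subseteq> small_vertices n E}"
      using core_edges_Un_small_edges[OF E(1)] E(3) by simp
    moreover have "{e \<in> E. e \<subseteq> small_vertices n E} \<in> matchings_on n (small_vertices n E0)"
      using small_edges_in_matchings_on[OF E(1)] E(2) by simp
    ultimately show "E \<in> ?I"
      by blast
  qed
  show "?I \<subseteq> ?F"
  proof
    fix E assume "E \<in> ?I"
    then obtain m where m: "m \<in> matchings_on n (small_vertices n E0)" "E = core_edges n E0 \<union> m"
      by blast
    have "E \<subseteq> all_pairs n"
      using assms matching_on_subset_all_pairs[OF m(1)] unfolding m(2) core_edges_def by blast
    then show "E \<in> ?F"
      using small_vertices_core_Un_matching[OF assms m(1)] core_edges_core_Un_matching[OF assms m(1)]
      unfolding m(2) by blast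
  qed
qed

lemma inj_on_core_edges_Un:
  "inj_on (\<lambda>m. core_edges n E0 \<union> m) (matchings_on n (small_vertices n E0))"
proof (rule inj_onI)
  fix m1 m2
  assume m: "m1 \<in> matchings_on n (small_vertices n E0)" "m2 \<in> matchings_on n (small_vertices n E0)"
    and eq: "core_edges n E0 \<union> m1 = core_edges n E0 \<union> m2"
  then show "m1 = m2"
    using core_edges_Int_matching_on[OF m(1)] core_edges_Int_matching_on[OF m(2)] by blast
qed

lemma gnq_fibre_sum:
  assumes "E0 \<subseteq> all_pairs n"
  shows "(\<Sum>E | E \<subseteq> all_pairs n \<and> small_vertices n E = small_vertices n E0
                    \<and> core_edges n E = core_edges n E0 \<and> P E. f E)
       = (\<Sum>m | m \<in> matchings_on n (small_vertices n E0) \<and> P (core_edges n E0 \<union> m).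
            f (core_edges n E0 \<union> m))"
proof -
  let ?g = "\<lambda>m. core_edges n E0 \<union> m"
  have "{E. E \<subseteq> all_pairs n \<and> small_vertices n E = small_vertices n E0
            \<and> core_edges n E = core_edges n E0 \<and> P E}
      = {E \<in> {E. E \<subseteq> all_pairs n \<and> small_vertices n E = small_vertices n E0
            \<and> core_edges n E = core_edges n E0}. P E}"
    by auto
  also have "\<dots> = {E \<in> ?g ` matchings_on n (small_vertices n E0). P E}"
    unfolding gnq_fibre_eq_image[OF assms] ..
  also have "\<dots> = ?g ` {m. m \<in> matchings_on n (small_vertices n E0) \<and> P (?g m)}"
    by auto
  finally have fibre: "{E. E \<subseteq> all_pairs n \<and> small_vertices n E = small_vertices n E0
            \<and> core_edges n E = core_edges n E0 \<and> P E}
      = ?g ` {m. m \<in> matchings_on n (small_vertices n E0) \<and> P (?g m)}" .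
  have "inj_on ?g {m. m \<in> matchings_on n (small_vertices n E0) \<and> P (?g m)}"
    using inj_on_core_edges_Un by (rule inj_on_subset) blast
  then show ?thesis
    unfolding fibre by (simp add: sum.reindex)
qed

section \<open>Anti-concentration of the size of a weighted random matching\<close>

lemma real_choose_2: "real (m choose 2) = real m * (real m - 1) / 2"
proof (induction m)
  case (Suc m)
  have "Suc m choose 2 = m + (m choose 2)"
    by (simp add: numeral_2_eq_2)
  then show ?case
    using Suc by (simp add: field_simps)
qed simp

lemma one_plus_power_le_exp: "0 \<le> x \<Longrightarrow> (1 + x) ^ m \<le> exp (real m * x)"
proof -
  assume "0 \<le> x"
  then have "(1 + x) ^ m \<le> exp x ^ m"
    by (intro power_mono) (auto simp: add.commute)
  then show ?thesis
    by (simp add: exp_of_nat_mult)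
qed

lemma card_window_le: "card {k :: nat. k \<le> t \<and> x \<le> real k \<and> real k \<le> x + real l} \<le> l + 1"
proof -
  define c where "c = nat \<lceil>x\<rceil>"
  have "{k :: nat. k \<le> t \<and> x \<le> real k \<and> real k \<le> x + real l} \<subseteq> {c..c + l}"
  proof
    fix k assume "k \<in> {k :: nat. k \<le> t \<and> x \<le> real k \<and> real k \<le> x + real l}"
    then have "x \<le> real k" "real k \<le> x + real l"
      by auto
    then have "\<lceil>x\<rceil> \<le> int k" "int k \<le> \<lceil>x\<rceil> + int l"
      by (simp_all add: ceiling_le_iff) linarith
    then show "k \<in> {c..c + l}"
      unfolding c_def atLeastAtMost_iff by (simp add: nat_le_iff le_nat_iff)
  qed
  then show ?thesis
    using card_mono[of "{c..c + l}"] by fastforce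
qed

lemma window_sum_le_of_flat_mode:
  fixes w :: "nat \<Rightarrow> real"
  assumes nonneg: "\<And>k. 0 \<le> w k" and "K \<le> t" and mode: "\<And>k. k \<le> t \<Longrightarrow> w k \<le> w K"
    and "s \<le> K" "0 \<le> C" and flat: "\<And>i. i \<le> s \<Longrightarrow> w K \<le> C * w (K - i)"
  shows "(\<Sum>k | k \<le> t \<and> x \<le> real k \<and> real k \<le> x + real l. w k)
           \<le> (real l + 1) * C / (real s + 1) * (\<Sum>k\<le>t. w k)"
proof -
  let ?W = "{k. k \<le> t \<and> x \<le> real k \<and> real k \<le> x + real l}"
  have "(real s + 1) * w K = (\<Sum>i\<le>s. w K)"
    by simp
  also have "\<dots> \<le> (\<Sum>i\<le>s. C * w (K - i))"
    by (intro sum_mono flat) simp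
  also have "\<dots> = C * (\<Sum>k\<in>(\<lambda>i. K - i) ` {..s}. w k)"
    using \<open>s \<le> K\<close> by (subst sum.reindex) (auto simp: inj_on_def sum_distrib_left)
  also have "\<dots> \<le> C * (\<Sum>k\<le>t. w k)"
    using \<open>K \<le> t\<close> nonneg \<open>0 \<le> C\<close> by (intro mult_left_mono sum_mono2) auto
  finally have mode_le: "w K \<le> C / (real s + 1) * (\<Sum>k\<le>t. w k)"
    by (simp add: field_simps)
  have "(\<Sum>k\<in>?W. w k) \<le> (\<Sum>k\<in>?W. w K)"
    using mode by (intro sum_mono) auto
  also have "\<dots> \<le> (real l + 1) * w K"
    using card_window_le[of t x l] nonneg[of K] by (simp add: mult_right_mono)
  also have "\<dots> \<le> (real l + 1) * (C / (real s + 1) * (\<Sum>k\<le>t. w k))"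
    using mode_le by (intro mult_left_mono) auto
  finally show ?thesis
    by simp
qed

(* w k stands for a_k rho^k, where a_k is the number of k-edge matchings of a t-element set; the
   recursion double counts (k + 1)-edge matchings with a marked edge. *)
locale matching_weights =
  fixes t :: nat and \<rho> :: real and w :: "nat \<Rightarrow> real"
  assumes w_0_pos: "w 0 > 0"
    and w_Suc: "\<And>k. w (Suc k) * real (Suc k) = w k * real ((t - 2 * k) choose 2) * \<rho>"
    and rho_pos: "\<rho> > 0"
begin

lemma w_Suc_eq: "w (Suc k) = w k * (real ((t - 2 * k) choose 2) * \<rho> / real (Suc k))"
  using w_Suc[of k] by (simp add: field_simps)

lemma w_nonneg: "0 \<le> w k"
proof (induction k)
  case 0
  show ?case
    using w_0_pos by simp
next
  case (Suc k)
  then show ?case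
    using rho_pos by (simp add: w_Suc_eq)
qed

lemma mode_exists: "\<exists>K\<le>t. \<forall>k\<le>t. w k \<le> w K"
proof -
  have "Max (w ` {..t}) \<in> w ` {..t}"
    by (intro Max_in) auto
  then obtain K where "K \<le> t" "w K = Max (w ` {..t})"
    by (metis atMost_iff imageE)
  moreover have "w k \<le> Max (w ` {..t})" if "k \<le> t" for k
    using that by (intro Max_ge) auto
  ultimately show ?thesis
    by auto
qed

definition descent_ratio :: "nat \<Rightarrow> nat \<Rightarrow> real" where
  "descent_ratio K s = (1 + (2 * real s + 1) / (real t - 2 * real K - 1)) ^ 2
                         * (1 + real s / (real K - real s + 1))"

context
  fixes K :: nat
  assumes K_le: "K \<le> t" and mode: "\<And>k. k \<le> t \<Longrightarrow> w k \<le> w K"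
begin

lemma mode_pos: "w K > 0"
  using mode[of 0] w_0_pos by simp

lemma double_mode_le: "2 * K \<le> t"
proof (cases K)
  case (Suc k)
  have "w K * real K > 0"
    using mode_pos Suc by simp
  then have "w k * real ((t - 2 * k) choose 2) * \<rho> > 0"
    using w_Suc[of k] Suc by simp
  then have "(t - 2 * k) choose 2 > 0"
    by (cases "(t - 2 * k) choose 2 = 0") auto
  then have "t - 2 * k \<ge> 2"
    by (metis zero_less_binomial_iff)
  then show ?thesis
    using Suc by simp
qed simp

lemma mode_balance_upper:
  "(real t - 2 * real K) * (real t - 2 * real K - 1) * \<rho> \<le> 2 * real K + 2"
proof -
  have "w (Suc K) \<le> w K"
  proof (cases "Suc K \<le> t")
    case False
    then have "t - 2 * K = 0"
      using double_mode_le by simp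
    then show ?thesis
      using w_Suc_eq[of K] w_nonneg[of K] by (simp add: numeral_2_eq_2)
  qed (rule mode)
  then have "w K * (real ((t - 2 * K) choose 2) * \<rho> / real (Suc K)) \<le> w K * 1"
    by (simp add: w_Suc_eq)
  then have "real ((t - 2 * K) choose 2) * \<rho> / real (Suc K) \<le> 1"
    by (simp only: mult_le_cancel_left_pos[OF mode_pos])
  then have "real ((t - 2 * K) choose 2) * \<rho> \<le> real (Suc K)"
    by (simp add: field_simps)
  then show ?thesis
    using double_mode_le by (simp add: real_choose_2 field_simps)
qed

lemma mode_balance_lower:
  assumes "K \<ge> 1"
  shows "2 * real K \<le> (real t - 2 * real K + 2) * (real t - 2 * real K + 1) * \<rho>"
proof -
  obtain k where k: "K = Suc k"
    using assms by (cases K) auto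
  have step: "w K = w k * (real ((t - 2 * k) choose 2) * \<rho> / real K)"
    using w_Suc_eq[of k] k by simp
  then have "w k > 0"
    using mode_pos w_nonneg[of k] by (cases "w k = 0") auto
  moreover have "w k * 1 \<le> w k * (real ((t - 2 * k) choose 2) * \<rho> / real K)"
    using mode[of k] K_le k step by simp
  ultimately have "1 \<le> real ((t - 2 * k) choose 2) * \<rho> / real K"
    by (simp only: mult_le_cancel_left_pos)
  then have "real K \<le> real ((t - 2 * k) choose 2) * \<rho>"
    using assms by (simp add: field_simps)
  moreover have "real (t - 2 * k) = real t - 2 * real K + 2"
    using double_mode_le k by simp
  then have "real ((t - 2 * k) choose 2) = (real t - 2 * real K + 2) * (real t - 2 * real K + 1) / 2"
    unfolding real_choose_2 by simp
  ultimately show ?thesis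
    by simp
qed


context
  fixes s :: nat
  assumes s_pos: "s \<ge> 1"
    and t_sq_rho: "32 * real s ^ 2 \<le> real t ^ 2 * \<rho>"
    and t_large: "18 * real s ^ 2 \<le> real t"
    and t_large_rho: "162 * \<rho> * real s ^ 4 \<le> real t"
begin

lemma s_bounds: "1 \<le> real s" "real s \<le> real s ^ 2"
  using s_pos by (simp_all add: power2_eq_square)

(* Either the gap t - 2K or K itself is of order t; the balance at the mode then makes both large. *)
lemma mode_large: "real s ^ 2 + real s \<le> real K + 1"
proof (cases "real t - 2 * real K \<ge> real t / 2")
  case True
  have "real t \<ge> 18"
    using t_large s_bounds by linarith
  then have "(real t / 2) * (real t / 4) \<le> (real t - 2 * real K) * (real t - 2 * real K - 1)"
    using True by (intro mult_mono) auto
  then have "(real t / 2) * (real t / 4) * \<rho> \<le> (real t - 2 * real K) * (real t - 2 * real K - 1) * \<rho>"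
    using rho_pos by (intro mult_right_mono) auto
  moreover have "real t ^ 2 * \<rho> / 8 = (real t / 2) * (real t / 4) * \<rho>"
    by (simp add: power2_eq_square)
  ultimately have "real t ^ 2 * \<rho> / 8 \<le> (real t - 2 * real K) * (real t - 2 * real K - 1) * \<rho>"
    by linarith
  then show ?thesis
    using mode_balance_upper t_sq_rho s_bounds by linarith
next
  case False
  then show ?thesis
    using t_large s_bounds by linarith
qed

lemma gap_large: "4 * real s ^ 2 + 2 * real s \<le> real t - 2 * real K - 1"
proof (cases "real t - 2 * real K \<ge> real t / 2")
  case True
  then show ?thesis
    using t_large s_bounds by linarith
next
  case False
  let ?U = "real t - 2 * real K"
  have "real t \<ge> 18"
    using t_large s_bounds by linarith
  then have "K \<ge> 1"
    using False by simp
  have U_nonneg: "?U \<ge> 0"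
    using double_mode_le by simp
  have "real t / 2 < 2 * real K"
    using False by simp
  also have "\<dots> \<le> (?U + 2) * (?U + 1) * \<rho>"
    using mode_balance_lower[OF \<open>K \<ge> 1\<close>] .
  also have "\<dots> \<le> (?U + 2) ^ 2 * \<rho>"
    using U_nonneg rho_pos by (intro mult_right_mono) (auto simp: power2_eq_square)
  finally have "81 * \<rho> * real s ^ 4 < (?U + 2) ^ 2 * \<rho>"
    using t_large_rho by linarith
  then have "81 * real s ^ 4 < (?U + 2) ^ 2"
    using rho_pos by (simp add: mult.commute[of _ \<rho>] mult.assoc)
  moreover have "(9 * real s ^ 2) ^ 2 = 81 * real s ^ 4"
    by (simp add: power_mult_distrib flip: power_mult)
  ultimately have squares_less: "(9 * real s ^ 2) ^ 2 < (?U + 2) ^ 2"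
    by simp
  have "9 * real s ^ 2 < ?U + 2"
    using power_less_imp_less_base[where n = 2, OF squares_less] U_nonneg by simp
  moreover have "4 * real s ^ 2 + 2 * real s + 3 \<le> 9 * real s ^ 2"
    using s_bounds by linarith
  ultimately show ?thesis
    by linarith
qed

lemma s_le_mode: "s \<le> K"
  using mode_large s_bounds by linarith

lemma descent_ratio_denominators_pos: "0 < real t - 2 * real K - 1" "0 < real K - real s + 1"
proof -
  show "0 < real t - 2 * real K - 1"
    using gap_large s_bounds by linarith
  have "real s \<le> real K"
    using s_le_mode by simp
  then show "0 < real K - real s + 1"
    by linarith
qed

lemma descent_ratio_ge_1: "1 \<le> descent_ratio K s"
proof -
  have "1 \<le> (1 + (2 * real s + 1) / (real t - 2 * real K - 1)) ^ 2"
    "1 \<le> 1 + real s / (real K - real s + 1)"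
    using descent_ratio_denominators_pos by (auto intro: one_le_power)
  then show ?thesis
    unfolding descent_ratio_def using mult_mono by fastforce
qed

lemma choose_below_mode_le:
  assumes "i < s"
  shows "real ((t - 2 * (K - Suc i)) choose 2) * \<rho>
           \<le> (1 + (2 * real s + 1) / (real t - 2 * real K - 1)) ^ 2 * (real K + 1)"
proof -
  let ?U = "real t - 2 * real K" and ?S = "real s"
  have U_pos: "?U - 1 > 0"
    using descent_ratio_denominators_pos by auto
  have "real (t - 2 * (K - Suc i)) = ?U + 2 * real i + 2"
    using assms s_le_mode double_mode_le by simp
  then have "real ((t - 2 * (K - Suc i)) choose 2) = (?U + 2 * real i + 2) * (?U + 2 * real i + 1) / 2"
    unfolding real_choose_2 by simp
  also have "\<dots> \<le> (?U + 2 * ?S) * (?U + 2 * ?S) / 2"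
    using assms U_pos by (intro divide_right_mono mult_mono) auto
  also have "\<dots> \<le> (1 + (2 * ?S + 1) / (?U - 1)) ^ 2 * (?U * (?U - 1)) / 2"
  proof -
    have square_cancel: "(x / d) ^ 2 * (u * d) = x ^ 2 * (u / d)" if "d \<noteq> 0" for x d u :: real
      using that by (simp add: power2_eq_square field_simps)
    have "1 + (2 * ?S + 1) / (?U - 1) = (?U + 2 * ?S) / (?U - 1)"
      using U_pos by (simp add: field_simps)
    then have "(1 + (2 * ?S + 1) / (?U - 1)) ^ 2 * (?U * (?U - 1)) = (?U + 2 * ?S) ^ 2 * (?U / (?U - 1))"
      using U_pos square_cancel by simp
    also have "\<dots> \<ge> (?U + 2 * ?S) ^ 2"
      using U_pos by (simp add: field_simps)
    finally show ?thesis
      by (simp add: power2_eq_square)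
  qed
  finally have "real ((t - 2 * (K - Suc i)) choose 2) * \<rho>
      \<le> (1 + (2 * ?S + 1) / (?U - 1)) ^ 2 * (?U * (?U - 1) * \<rho> / 2)"
    using rho_pos by (simp add: mult_right_mono)
  also have "\<dots> \<le> (1 + (2 * ?S + 1) / (?U - 1)) ^ 2 * (real K + 1)"
    using mode_balance_upper by (intro mult_left_mono) auto
  finally show ?thesis .
qed

lemma ratio_step:
  assumes "i < s"
  shows "w (K - i) \<le> descent_ratio K s * w (K - Suc i)"
proof -
  define j where "j = K - Suc i"
  have Suc_j: "Suc j = K - i"
    unfolding j_def using assms s_le_mode by simp
  have "(real K + 1) / real (Suc j) = 1 + (real i + 1) / (real K - real i)"
    unfolding Suc_j using assms s_le_mode by (simp add: field_simps)
  also have "\<dots> \<le> 1 + real s / (real K - real s + 1)"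
    using assms descent_ratio_denominators_pos by (intro add_left_mono frac_le) auto
  finally have ratio_le: "(real K + 1) / real (Suc j) \<le> 1 + real s / (real K - real s + 1)" .
  have "real ((t - 2 * j) choose 2) * \<rho> / real (Suc j)
      \<le> (1 + (2 * real s + 1) / (real t - 2 * real K - 1)) ^ 2 * (real K + 1) / real (Suc j)"
    using choose_below_mode_le[OF assms] unfolding j_def by (simp add: divide_right_mono)
  also have "\<dots> \<le> descent_ratio K s"
    unfolding descent_ratio_def times_divide_eq_right[symmetric] using ratio_le
    by (intro mult_left_mono) auto
  finally have "w j * (real ((t - 2 * j) choose 2) * \<rho> / real (Suc j)) \<le> w j * descent_ratio K s"
    using w_nonneg[of j] by (rule mult_left_mono)
  then have "w (Suc j) \<le> w j * descent_ratio K s"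
    by (simp only: w_Suc_eq)
  then show ?thesis
    using Suc_j by (simp add: j_def mult.commute)
qed

lemma descent_ratio_power_le: "descent_ratio K s ^ s \<le> exp 2"
proof -
  let ?U = "real t - 2 * real K" and ?S = "real s"
  have U_pos: "?U - 1 > 0" and K_pos: "real K - ?S + 1 > 0"
    using descent_ratio_denominators_pos by auto
  have "(1 + (2 * ?S + 1) / (?U - 1)) ^ (2 * s) \<le> exp (real (2 * s) * ((2 * ?S + 1) / (?U - 1)))"
    using U_pos by (intro one_plus_power_le_exp) auto
  also have "\<dots> \<le> exp 1"
    using gap_large U_pos by (simp add: field_simps power2_eq_square)
  finally have first: "((1 + (2 * ?S + 1) / (?U - 1)) ^ 2) ^ s \<le> exp 1"
    by (simp add: power_mult)
  have "(1 + ?S / (real K - ?S + 1)) ^ s \<le> exp (?S * (?S / (real K - ?S + 1)))"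
    using K_pos by (intro one_plus_power_le_exp) auto
  also have "\<dots> \<le> exp 1"
    using mode_large K_pos by (simp add: field_simps power2_eq_square)
  finally have second: "(1 + ?S / (real K - ?S + 1)) ^ s \<le> exp 1" .
  have "0 \<le> 1 + ?S / (real K - ?S + 1)"
    using K_pos by simp
  then have "descent_ratio K s ^ s \<le> exp 1 * exp 1"
    unfolding descent_ratio_def power_mult_distrib
    using first second by (intro mult_mono) auto
  then show ?thesis
    by (simp add: exp_add[symmetric])
qed

lemma mode_flat:
  assumes "i \<le> s"
  shows "w K \<le> exp 2 * w (K - i)"
proof -
  have "w K \<le> descent_ratio K s ^ i * w (K - i)"
    using assms
  proof (induction i)
    case (Suc i)
    then have "w K \<le> descent_ratio K s ^ i * w (K - i)"
      by simp
    also have "\<dots> \<le> descent_ratio K s ^ i * (descent_ratio K s * w (K - Suc i))"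
      using ratio_step[of i] Suc.prems descent_ratio_ge_1 by (intro mult_left_mono) auto
    finally show ?case
      by (simp add: ac_simps)
  qed simp
  also have "\<dots> \<le> descent_ratio K s ^ s * w (K - i)"
    using assms descent_ratio_ge_1 w_nonneg by (intro mult_right_mono power_increasing) auto
  also have "\<dots> \<le> exp 2 * w (K - i)"
    using descent_ratio_power_le w_nonneg by (intro mult_right_mono) auto
  finally show ?thesis .
qed

end

end

lemma window_sum_le:
  assumes "s \<ge> 1" "32 * real s ^ 2 \<le> real t ^ 2 * \<rho>" "18 * real s ^ 2 \<le> real t"
    "162 * \<rho> * real s ^ 4 \<le> real t"
  shows "(\<Sum>k | k \<le> t \<and> x \<le> real k \<and> real k \<le> x + real l. w k)
           \<le> (real l + 1) * exp 2 / (real s + 1) * (\<Sum>k\<le>t. w k)"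
proof -
  obtain K where K: "K \<le> t" "\<And>k. k \<le> t \<Longrightarrow> w k \<le> w K"
    using mode_exists by blast
  show ?thesis
    using w_nonneg K s_le_mode[OF K assms] mode_flat[OF K assms]
    by (intro window_sum_le_of_flat_mode) auto
qed

end

lemma matching_weights_matchings_of_size:
  assumes "T \<subseteq> {1..n}" "\<rho> > 0"
  shows "matching_weights (card T) \<rho> (\<lambda>k. real (card (matchings_of_size n T k)) * \<rho> ^ k)"
proof
  fix k
  have "real (card (matchings_of_size n T (Suc k))) * real (Suc k)
      = real (card (matchings_of_size n T k)) * real ((card T - 2 * k) choose 2)"
    using card_matchings_of_size_Suc[OF assms(1), of k] by (simp only: of_nat_mult[symmetric])
  then show "real (card (matchings_of_size n T (Suc k))) * \<rho> ^ Suc k * real (Suc k)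
      = real (card (matchings_of_size n T k)) * \<rho> ^ k * real ((card T - 2 * k) choose 2) * \<rho>"
    by (simp add: algebra_simps)
qed (use assms in \<open>simp_all add: matchings_of_size_0\<close>)

lemma window_prob_core_Un_matching:
  fixes a :: real and l s :: nat
  assumes T: "T \<subseteq> {1..n}" and H: "H \<subseteq> all_pairs n" "\<And>e. e \<in> H \<Longrightarrow> e \<inter> T = {}"
    and q: "0 < q" "q < 1" and s: "s \<ge> 1"
    and t_sq_rho: "32 * real s ^ 2 \<le> real (card T) ^ 2 * (q / (1 - q))"
    and t_large: "18 * real s ^ 2 \<le> real (card T)"
    and t_large_rho: "162 * (q / (1 - q)) * real s ^ 4 \<le> real (card T)"
  shows "(\<Sum>m\<in>{m \<in> matchings_on n T. a \<le> real (matching_number (H \<union> m))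
                                       \<and> real (matching_number (H \<union> m)) \<le> a + real l}.
            subset_weight (all_pairs n) q (H \<union> m))
         \<le> (real l + 1) * exp 2 / (real s + 1)
              * (\<Sum>m\<in>matchings_on n T. subset_weight (all_pairs n) q (H \<union> m))"
proof -
  define \<rho> where "\<rho> = q / (1 - q)"
  define c where "c k = real (card (matchings_of_size n T k))" for k
  define x where "x = a - real (matching_number H)"
  let ?wH = "subset_weight (all_pairs n) q H"
  have fin_T: "finite T"
    using T finite_subset by blast
  have window_shift: "(a \<le> real (matching_number H + k) \<and> real (matching_number H + k) \<le> a + real l)
      \<longleftrightarrow> x \<le> real k \<and> real k \<le> x + real l" for k
    unfolding x_def by auto
  have "(\<Sum>m\<in>{m \<in> matchings_on n T. a \<le> real (matching_number (H \<union> m))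
                                       \<and> real (matching_number (H \<union> m)) \<le> a + real l}.
            subset_weight (all_pairs n) q (H \<union> m))
      = (\<Sum>m\<in>matchings_on n T. subset_weight (all_pairs n) q (H \<union> m)
          * of_bool (a \<le> real (matching_number (H \<union> m)) \<and> real (matching_number (H \<union> m)) \<le> a + real l))"
    using finite_matchings_on by (simp add: Int_def)
  also have "\<dots> = (\<Sum>m\<in>matchings_on n T. subset_weight (all_pairs n) q (H \<union> m)
          * of_bool (x \<le> real (card m) \<and> real (card m) \<le> x + real l))"
    by (intro sum.cong refl) (simp add: matching_number_Un_matching_on[OF H] window_shift del: of_nat_add)
  also have "\<dots> = ?wH * (\<Sum>k\<le>card T. c k * (\<rho> ^ k * of_bool (x \<le> real k \<and> real k \<le> x + real l)))"
    using sum_matchings_on_core_Un[OF fin_T H q(2), where f = "\<lambda>k. of_bool (x \<le> real k \<and> real k \<le> x + real l)"]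
    by (simp only: \<rho>_def c_def)
  also have "\<dots> = ?wH * (\<Sum>k | k \<le> card T \<and> x \<le> real k \<and> real k \<le> x + real l. c k * \<rho> ^ k)"
    by (simp add: mult.assoc[symmetric] Int_def)
  also have "\<dots> \<le> ?wH * ((real l + 1) * exp 2 / (real s + 1) * (\<Sum>k\<le>card T. c k * \<rho> ^ k))"
  proof (rule mult_left_mono)
    have "\<rho> > 0"
      unfolding \<rho>_def using q by simp
    then interpret matching_weights "card T" \<rho> "\<lambda>k. c k * \<rho> ^ k"
      unfolding c_def by (rule matching_weights_matchings_of_size[OF T])
    show "(\<Sum>k | k \<le> card T \<and> x \<le> real k \<and> real k \<le> x + real l. c k * \<rho> ^ k)
        \<le> (real l + 1) * exp 2 / (real s + 1) * (\<Sum>k\<le>card T. c k * \<rho> ^ k)"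
      using s t_sq_rho t_large t_large_rho unfolding \<rho>_def[symmetric] by (rule window_sum_le)
    show "0 \<le> ?wH"
      using q by (intro subset_weight_nonneg) auto
  qed
  also have "\<dots> = (real l + 1) * exp 2 / (real s + 1)
      * (\<Sum>m\<in>matchings_on n T. subset_weight (all_pairs n) q (H \<union> m))"
    using sum_matchings_on_core_Un[OF fin_T H q(2), where f = "\<lambda>_. 1"]
    by (simp add: \<rho>_def c_def mult.left_commute)
  finally show ?thesis .
qed

lemma fibre_window_le:
  fixes a :: real and l s :: nat
  assumes E0: "E0 \<subseteq> all_pairs n" and q: "0 < q" "q < 1" and s: "s \<ge> 1"
    and large: "32 * real s ^ 2 \<le> real (card (small_vertices n E0)) ^ 2 * (q / (1 - q))"
      "18 * real s ^ 2 \<le> real (card (small_vertices n E0))"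
      "162 * (q / (1 - q)) * real s ^ 4 \<le> real (card (small_vertices n E0))"
  shows "(\<Sum>E | E \<subseteq> all_pairs n \<and> small_vertices n E = small_vertices n E0
                \<and> core_edges n E = core_edges n E0
                \<and> a \<le> real (matching_number E) \<and> real (matching_number E) \<le> a + real l.
            subset_weight (all_pairs n) q E)
         \<le> (real l + 1) * exp 2 / (real s + 1) *
            (\<Sum>E | E \<subseteq> all_pairs n \<and> small_vertices n E = small_vertices n E0
                    \<and> core_edges n E = core_edges n E0. subset_weight (all_pairs n) q E)"
proof -
  have T: "small_vertices n E0 \<subseteq> {1..n}"
    unfolding small_vertices_def by blast
  have H: "core_edges n E0 \<subseteq> all_pairs n"
    "\<And>e. e \<in> core_edges n E0 \<Longrightarrow> e \<inter> small_vertices n E0 = {}"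
    using E0 unfolding core_edges_def by auto
  have fibre: "(\<Sum>E | E \<subseteq> all_pairs n \<and> small_vertices n E = small_vertices n E0
                        \<and> core_edges n E = core_edges n E0. f E)
      = (\<Sum>m\<in>matchings_on n (small_vertices n E0). f (core_edges n E0 \<union> m))" for f
    using gnq_fibre_sum[OF E0, where P = "\<lambda>_. True"] by simp
  show ?thesis
    unfolding gnq_fibre_sum[OF E0] fibre
    using window_prob_core_Un_matching[OF T H(1) H(2) q(1) q(2) s large(1) large(2) large(3), of a l]
    by simp
qed

lemma gnq_prob_window_many_small_vertices:
  fixes a t0 :: real and l s :: nat
  assumes q: "0 < q" "q < 1" and s: "s \<ge> 1"
    and large: "\<And>t :: nat. t0 \<le> real t \<Longrightarrow>
          32 * real s ^ 2 \<le> real t ^ 2 * (q / (1 - q)) \<and> 18 * real s ^ 2 \<le> real t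
          \<and> 162 * (q / (1 - q)) * real s ^ 4 \<le> real t"
  shows "gnq_prob n q (\<lambda>E. a \<le> real (matching_number E) \<and> real (matching_number E) \<le> a + real l
                          \<and> t0 \<le> real (card (small_vertices n E)))
           \<le> (real l + 1) * exp 2 / (real s + 1)"
proof -
  let ?w = "subset_weight (all_pairs n) q"
  let ?A = "{E. E \<subseteq> all_pairs n \<and> t0 \<le> real (card (small_vertices n E))}"
  let ?window = "\<lambda>E. a \<le> real (matching_number E) \<and> real (matching_number E) \<le> a + real l"
  let ?B = "(real l + 1) * exp 2 / (real s + 1)"
  let ?fibre = "\<lambda>E. (small_vertices n E, core_edges n E)"
  have fin_A: "finite ?A"
    by (rule finite_subset[of _ "Pow (all_pairs n)"]) (auto simp: finite_all_pairs)
  have "gnq_prob n q (\<lambda>E. ?window E \<and> t0 \<le> real (card (small_vertices n E)))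
      = (\<Sum>E | E \<in> ?A \<and> ?window E. ?w E)"
    unfolding gnq_prob_def subset_weight_def by (rule sum.cong) auto
  also have "\<dots> \<le> ?B * (\<Sum>E\<in>?A. ?w E)"
  proof (rule sum_le_by_fibres[OF fin_A, where \<phi> = ?fibre])
    fix E0 assume "E0 \<in> ?A"
    then have E0: "E0 \<subseteq> all_pairs n" "t0 \<le> real (card (small_vertices n E0))"
      by auto
    then have "{E. E \<in> ?A \<and> ?fibre E = ?fibre E0 \<and> ?window E}
        = {E. E \<subseteq> all_pairs n \<and> small_vertices n E = small_vertices n E0
              \<and> core_edges n E = core_edges n E0 \<and> ?window E}"
      "{E. E \<in> ?A \<and> ?fibre E = ?fibre E0}
        = {E. E \<subseteq> all_pairs n \<and> small_vertices n E = small_vertices n E0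
              \<and> core_edges n E = core_edges n E0}"
      by auto
    then show "(\<Sum>E | E \<in> ?A \<and> ?fibre E = ?fibre E0 \<and> ?window E. ?w E)
        \<le> ?B * (\<Sum>E | E \<in> ?A \<and> ?fibre E = ?fibre E0. ?w E)"
      using fibre_window_le[OF E0(1) q s] large[OF E0(2)] by simp
  qed
  also have "\<dots> \<le> ?B"
  proof -
    have "(\<Sum>E\<in>?A. ?w E) \<le> (\<Sum>E\<in>Pow (all_pairs n). ?w E)"
      using q by (intro sum_mono2) (auto simp: finite_all_pairs subset_weight_nonneg)
    then show ?thesis
      by (intro mult_left_le) (simp_all add: sum_subset_weight_Pow finite_all_pairs)
  qed
  finally show ?thesis
    by (simp only: conj_assoc)
qed

section \<open>The sparse regime\<close>

lemma mult_exp_neg_le_1: "x * exp (- x) \<le> (1 :: real)"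
proof -
  have "x \<le> exp x"
    using exp_ge_add_one_self[of x] by linarith
  then have "x * exp (- x) \<le> exp x * exp (- x)"
    by (intro mult_right_mono) auto
  then show ?thesis
    by (simp add: exp_minus)
qed

(* X = n e^(-qn) is close to the expected number of isolated vertices, and L = X sqrt q is the
   length scale of the windows. *)
lemma isolated_scale_mult_q_le_1: "real n * exp (- q * real n) * q \<le> 1"
  using mult_exp_neg_le_1[of "q * real n"] by (simp add: ac_simps)

lemma window_scale_le_isolated_scale:
  assumes "0 \<le> q" "q \<le> 1"
  shows "real n * sqrt q * exp (- q * real n) \<le> real n * exp (- q * real n)"
proof (rule mult_right_mono)
  show "real n * sqrt q \<le> real n"
    using assms by (simp add: mult_left_le)
qed simp

lemma q_le_of_isolated_scale_ge_1:
  fixes q :: real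
  assumes "1 \<le> real n * exp (- q * real n)"
  shows "q \<le> 2 / sqrt (real n)"
proof -
  have n_pos: "real n > 0"
    using assms by (cases n) auto
  have "exp (q * real n) \<le> real n"
    using assms by (simp add: exp_minus field_simps)
  then have "q * real n \<le> ln (real n)"
    using n_pos by (simp add: ln_ge_iff)
  also have "\<dots> \<le> 2 * sqrt (real n)"
    using ln_le_minus_one[of "sqrt (real n)"] n_pos by (simp add: ln_sqrt)
  finally have "(q * sqrt (real n)) * sqrt (real n) \<le> 2 * sqrt (real n)"
    using n_pos by (simp add: mult.assoc)
  then have "q * sqrt (real n) \<le> 2"
    using n_pos by (simp only: mult_le_cancel_right_pos real_sqrt_gt_0_iff)
  then show ?thesis
    using n_pos by (simp add: field_simps)
qed

lemma expected_isolated_vertices_ge: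
  assumes q: "0 \<le> q" "q \<le> 1 / 2" and "q\<^sup>2 * real n \<le> 4"
  shows "exp (- 8) * (real n * exp (- q * real n)) \<le> real n * (1 - q) ^ (n - 1)"
proof -
  have "exp (- q * real n - 8) \<le> exp (real n * (- q - 2 * q\<^sup>2))"
    using assms(3) by (simp add: algebra_simps)
  also have "\<dots> \<le> exp (real n * ln (1 - q))"
    using ln_one_minus_pos_lower_bound[OF q] by (simp add: mult_left_mono)
  also have "\<dots> = (1 - q) ^ n"
    using q by (simp add: exp_of_nat_mult)
  also have "\<dots> \<le> (1 - q) ^ (n - 1)"
    using q by (intro power_decreasing) auto
  finally have "exp (- 8) * exp (- q * real n) \<le> (1 - q) ^ (n - 1)"
    by (simp add: exp_add[symmetric] add.commute)
  then show ?thesis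
    by (simp add: mult_left_mono mult.left_commute)
qed

lemma window_conditions_quadratic:
  fixes X q g t :: real and s :: nat
  assumes g: "0 < g" "g \<le> 1" and q: "0 < q" "q < 1" and X: "0 \<le> X" "X * q \<le> 1"
    and s: "real s ^ 2 \<le> g\<^sup>2 * X\<^sup>2 * q / 256" and t: "g * X / 2 \<le> t"
  shows "32 * real s ^ 2 \<le> t ^ 2 * (q / (1 - q))" "18 * real s ^ 2 \<le> t"
proof -
  have "32 * real s ^ 2 \<le> g\<^sup>2 * X\<^sup>2 * q / 4"
    using s zero_le_power2[of "real s"] by linarith
  also have "\<dots> = (g * X / 2)\<^sup>2 * q"
    by (simp add: power_mult_distrib power_divide)
  also have "\<dots> \<le> t\<^sup>2 * (q / (1 - q))"
    using t g X q by (intro mult_mono power_mono) (auto simp: field_simps)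
  finally show "32 * real s ^ 2 \<le> t ^ 2 * (q / (1 - q))" .
  have "18 * real s ^ 2 \<le> g\<^sup>2 * X\<^sup>2 * q / 2"
    using s zero_le_power2[of "real s"] by linarith
  also have "\<dots> = g * X / 2 * (g * (X * q))"
    by (simp add: power2_eq_square)
  also have "\<dots> \<le> g * X / 2"
    using g X q mult_le_one[of g "X * q"] by (intro mult_left_le) auto
  finally show "18 * real s ^ 2 \<le> t"
    using t by linarith
qed

lemma window_condition_quartic:
  fixes X q g t :: real and s :: nat
  assumes g: "0 < g" "g \<le> 1" and q: "0 < q" "q \<le> 1 / 2" and X: "0 \<le> X" "X * q \<le> 1"
    and s: "real s ^ 2 \<le> g\<^sup>2 * X\<^sup>2 * q / 256" and t: "g * X / 2 \<le> t"
  shows "162 * (q / (1 - q)) * real s ^ 4 \<le> t"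
proof -
  have "real s ^ 4 = (real s ^ 2)\<^sup>2"
    by (simp flip: power_mult)
  also have "\<dots> \<le> (g\<^sup>2 * X\<^sup>2 * q / 256)\<^sup>2"
    using s by (intro power_mono) auto
  finally have "324 * q * real s ^ 4 \<le> 324 * (q * (g\<^sup>2 * X\<^sup>2 * q / 256)\<^sup>2)"
    using q by simp
  also have "q * (g\<^sup>2 * X\<^sup>2 * q / 256)\<^sup>2 = g ^ 4 * (X * q) ^ 3 * X / 65536"
    by (simp add: power2_eq_square power3_eq_cube power4_eq_xxxx)
  also have "324 * (g ^ 4 * (X * q) ^ 3 * X / 65536) \<le> 324 * (g * 1 * X / 65536)"
    using g X q power_decreasing[of 1 4 g]
    by (intro mult_left_mono divide_right_mono mult_right_mono mult_mono) (auto simp: power_le_one)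
  also have "\<dots> \<le> g * X / 2"
    using g X by simp
  finally have "324 * q * real s ^ 4 \<le> g * X / 2" .
  moreover have "162 * (q / (1 - q)) * real s ^ 4 \<le> 324 * q * real s ^ 4"
    using q by (intro mult_right_mono) (auto simp: field_simps)
  ultimately show ?thesis
    using t by linarith
qed

lemma sparse_regime:
  fixes n :: nat and q :: real
  defines "L \<equiv> real n * sqrt q * exp (- q * real n)" and "X \<equiv> real n * exp (- q * real n)"
  assumes q: "0 \<le> q" "q \<le> 1" and L_large: "16 \<le> L"
  shows "0 < q" "q \<le> 1 / 2" "q \<le> 2 / sqrt L" "n \<ge> 2" "L = X * sqrt q" "X * q \<le> 1" "L \<le> X"
    "exp (- 8) * X \<le> real n * (1 - q) ^ (n - 1)"
proof -
  show "L = X * sqrt q"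
    unfolding L_def X_def by (simp add: ac_simps)
  show "X * q \<le> 1"
    unfolding X_def by (rule isolated_scale_mult_q_le_1)
  show L_le: "L \<le> X"
    unfolding L_def X_def by (rule window_scale_le_isolated_scale[OF q])
  have X_le: "X \<le> real n"
    unfolding X_def using q by (simp add: mult_left_le)
  then show "n \<ge> 2"
    using L_large L_le by linarith
  show "0 < q"
    using L_large q unfolding L_def by (cases "q = 0") auto
  have "1 \<le> X"
    using L_large L_le by linarith
  then have q_le: "q \<le> 2 / sqrt (real n)"
    unfolding X_def by (rule q_le_of_isolated_scale_ge_1)
  also have "\<dots> \<le> 2 / sqrt L"
    using L_large L_le X_le by (intro divide_left_mono) auto
  finally show "q \<le> 2 / sqrt L" .
  have "sqrt (4\<^sup>2) \<le> sqrt L"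
    using L_large by (intro real_sqrt_le_mono) simp
  then have "2 / sqrt L \<le> 2 / 4"
    using L_large by (intro divide_left_mono) auto
  then show q_half: "q \<le> 1 / 2"
    using \<open>q \<le> 2 / sqrt L\<close> by linarith
  have "q\<^sup>2 * real n \<le> (2 / sqrt (real n))\<^sup>2 * real n"
    using q q_le by (intro mult_right_mono power_mono) auto
  also have "\<dots> = 4"
    using \<open>n \<ge> 2\<close> by (simp add: power_divide)
  finally show "exp (- 8) * X \<le> real n * (1 - q) ^ (n - 1)"
    unfolding X_def using expected_isolated_vertices_ge[OF q(1) q_half] by simp
qed

lemma sparse_window_conditions:
  fixes n s t :: nat and q :: real
  defines "L \<equiv> real n * sqrt q * exp (- q * real n)" and "X \<equiv> real n * exp (- q * real n)"
  assumes q: "0 \<le> q" "q \<le> 1" and L_large: "16 \<le> L"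
    and s: "real s \<le> exp (- 8) * L / 16" and t: "exp (- 8) * X / 2 \<le> real t"
  shows "32 * real s ^ 2 \<le> real t ^ 2 * (q / (1 - q)) \<and> 18 * real s ^ 2 \<le> real t
           \<and> 162 * (q / (1 - q)) * real s ^ 4 \<le> real t"
proof -
  note regime = sparse_regime[OF q L_large[unfolded L_def], folded L_def X_def]
  have "real s ^ 2 \<le> (exp (- 8) * L / 16)\<^sup>2"
    using s by (intro power_mono) auto
  also have "\<dots> = (exp (- 8))\<^sup>2 * X\<^sup>2 * q / 256"
    using regime(1,5) by (simp add: power_mult_distrib power_divide)
  finally have s2: "real s ^ 2 \<le> (exp (- 8))\<^sup>2 * X\<^sup>2 * q / 256" .
  have "0 \<le> X" "q < 1"
    using regime(2,7) L_large by auto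
  then show ?thesis
    using window_conditions_quadratic[OF _ _ regime(1) _ _ regime(6) s2 t]
      window_condition_quartic[OF _ _ regime(1,2) _ regime(6) s2 t] by simp
qed

lemma gnq_prob_matching_number_window_le_split:
  fixes n :: nat and q a :: real and l s :: nat
  defines "\<mu> \<equiv> real n * (1 - q) ^ (n - 1)"
  assumes q: "0 < q" "q < 1" and "n \<ge> 2" "s \<ge> 1"
    and large: "\<And>t :: nat. \<mu> / 2 \<le> real t \<Longrightarrow>
          32 * real s ^ 2 \<le> real t ^ 2 * (q / (1 - q)) \<and> 18 * real s ^ 2 \<le> real t
          \<and> 162 * (q / (1 - q)) * real s ^ 4 \<le> real t"
  shows "gnq_prob n q (\<lambda>E. a \<le> real (matching_number E) \<and> real (matching_number E) \<le> a + real l)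
           \<le> 4 / \<mu> + 4 * q / (1 - q) + (real l + 1) * exp 2 / (real s + 1)"
proof -
  have "gnq_prob n q (\<lambda>E. a \<le> real (matching_number E) \<and> real (matching_number E) \<le> a + real l)
      \<le> gnq_prob n q (\<lambda>E. real (card (isolated_vertices n E)) < \<mu> / 2)
        + gnq_prob n q (\<lambda>E. a \<le> real (matching_number E) \<and> real (matching_number E) \<le> a + real l
                          \<and> \<mu> / 2 \<le> real (card (small_vertices n E)))"
    using q card_isolated_vertices_le_small_vertices[of n]
    by (intro gnq_prob_union_bound) (auto simp: not_less intro: order_trans)
  also have "\<dots> \<le> (4 / \<mu> + 4 * q / (1 - q)) + (real l + 1) * exp 2 / (real s + 1)"
  proof (intro add_mono)
    show "gnq_prob n q (\<lambda>E. real (card (isolated_vertices n E)) < \<mu> / 2) \<le> 4 / \<mu> + 4 * q / (1 - q)"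
      unfolding \<mu>_def using q \<open>n \<ge> 2\<close> by (intro gnq_prob_few_isolated_vertices) auto
    show "gnq_prob n q (\<lambda>E. a \<le> real (matching_number E) \<and> real (matching_number E) \<le> a + real l
                          \<and> \<mu> / 2 \<le> real (card (small_vertices n E)))
        \<le> (real l + 1) * exp 2 / (real s + 1)"
      by (rule gnq_prob_window_many_small_vertices[OF q \<open>s \<ge> 1\<close> large])
  qed
  finally show ?thesis
    by simp
qed

lemma isolated_error_le:
  assumes "exp (- 8) * L \<le> \<mu>" "0 < L" "0 < q" "q \<le> 1 / 2" "q \<le> 2 / sqrt L"
  shows "4 / \<mu> + 4 * q / (1 - q) \<le> 4 * exp 8 / L + 16 / sqrt L"
proof (rule add_mono)
  have "0 < exp (- 8) * L"
    using assms(2) by simp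
  then have "4 / \<mu> \<le> 4 / (exp (- 8) * L)"
    using assms(1) by (intro divide_left_mono) auto
  then show "4 / \<mu> \<le> 4 * exp 8 / L"
    by (simp add: exp_minus field_simps)
  have "4 * q / (1 - q) \<le> 4 * q / (1 / 2)"
    using assms(3,4) by (intro divide_left_mono) auto
  also have "\<dots> \<le> 8 * (2 / sqrt L)"
    using assms(5) by simp
  finally show "4 * q / (1 - q) \<le> 16 / sqrt L"
    by simp
qed

lemma window_error_le:
  assumes "real l \<le> d * L" "exp (- 8) * L / 16 \<le> real s + 1" "0 < L"
  shows "(real l + 1) * exp 2 / (real s + 1) \<le> 16 * exp 10 * d + 16 * exp 10 / L"
proof -
  have "(real l + 1) * exp 2 / (real s + 1) \<le> (d * L + 1) * exp 2 / (exp (- 8) * L / 16)"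
    using assms by (intro frac_le mult_right_mono) auto
  also have "\<dots> = 16 * exp 10 * d + 16 * exp 10 / L"
  proof -
    have "exp (2 :: real) = exp (- 8) * exp 10"
      by (simp flip: exp_add)
    then show ?thesis
      using assms(3) by (simp add: field_simps)
  qed
  finally show ?thesis .
qed

theorem gnq_prob_matching_number_window_le:
  fixes n :: nat and q d a :: real
  defines "L \<equiv> real n * sqrt q * exp (- q * real n)"
  assumes q: "0 \<le> q" "q \<le> 1" and d: "0 \<le> d" and L_large: "16 * exp 8 \<le> L"
  shows "gnq_prob n q (\<lambda>E. a \<le> real (matching_number E) \<and> real (matching_number E) \<le> a + of_int \<lfloor>d * L\<rfloor>)
           \<le> 16 * exp 10 * d + (16 * exp 10 + 4 * exp 8) / L + 16 / sqrt L"
proof -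
  define X where "X = real n * exp (- q * real n)"
  define \<mu> where "\<mu> = real n * (1 - q) ^ (n - 1)"
  define s where "s = nat \<lfloor>exp (- 8) * L / 16\<rfloor>"
  define l where "l = nat \<lfloor>d * L\<rfloor>"
  have "(1 :: real) \<le> exp 8"
    by simp
  then have L_16: "16 \<le> L"
    using L_large by linarith
  note regime = sparse_regime[OF q L_16[unfolded L_def], folded L_def X_def \<mu>_def]
  have L_scaled: "1 \<le> exp (- 8) * L / 16"
    using L_large by (simp add: exp_minus field_simps)
  have s: "1 \<le> s" "real s \<le> exp (- 8) * L / 16" "exp (- 8) * L / 16 \<le> real s + 1"
    unfolding s_def using L_scaled by linarith+
  have l: "of_int \<lfloor>d * L\<rfloor> = real l" "real l \<le> d * L"
    unfolding l_def using d L_16 by simp_all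
  have "exp (- 8) * L \<le> exp (- 8) * X"
    using regime(7) by simp
  then have \<mu>: "exp (- 8) * L \<le> \<mu>"
    using regime(8) by linarith
  have "gnq_prob n q (\<lambda>E. a \<le> real (matching_number E) \<and> real (matching_number E) \<le> a + real l)
      \<le> 4 / \<mu> + 4 * q / (1 - q) + (real l + 1) * exp 2 / (real s + 1)"
    unfolding \<mu>_def
  proof (rule gnq_prob_matching_number_window_le_split)
    fix t :: nat assume "real n * (1 - q) ^ (n - 1) / 2 \<le> real t"
    then have "exp (- 8) * X / 2 \<le> real t"
      using regime(8) unfolding \<mu>_def by linarith
    then show "32 * real s ^ 2 \<le> real t ^ 2 * (q / (1 - q)) \<and> 18 * real s ^ 2 \<le> real t
          \<and> 162 * (q / (1 - q)) * real s ^ 4 \<le> real t"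
      using sparse_window_conditions[OF q L_16[unfolded L_def], folded L_def X_def, OF s(2)] by blast
  qed (use regime s in auto)
  also have "\<dots> \<le> (4 * exp 8 / L + 16 / sqrt L) + (16 * exp 10 * d + 16 * exp 10 / L)"
    using L_16 by (intro add_mono isolated_error_le[OF \<mu> _ regime(1-3)] window_error_le[OF l(2) s(3)]) auto
  finally show ?thesis
    unfolding l by (simp add: add_divide_distrib)
qed

definition window_error :: "real \<Rightarrow> real" where
  "window_error L = (if 16 * exp 8 \<le> L then (16 * exp 10 + 4 * exp 8) / L + 16 / sqrt L else 1)"

lemma window_error_tendsto_0: "(window_error \<longlongrightarrow> 0) at_top"
proof (rule Lim_transform_eventually)
  show "((\<lambda>L. (16 * exp 10 + 4 * exp 8) / L + 16 / sqrt L) \<longlongrightarrow> (0 :: real)) at_top"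
    by real_asymp
  show "\<forall>\<^sub>F L in at_top. (16 * exp 10 + 4 * exp 8) / L + 16 / sqrt L = window_error L"
    using eventually_ge_at_top[of "16 * exp 8"] by eventually_elim (simp add: window_error_def)
qed

corollary gnq_prob_matching_number_window_le_error:
  fixes n :: nat and q d a :: real
  assumes "0 \<le> q" "q \<le> 1" "0 \<le> d"
  shows "gnq_prob n q (\<lambda>E. a \<le> real (matching_number E) \<and>
           real (matching_number E) \<le> a + of_int \<lfloor>d * real n * sqrt q * exp (- q * real n)\<rfloor>)
         \<le> 16 * exp 10 * d + window_error (real n * sqrt q * exp (- q * real n))"
proof (cases "16 * exp 8 \<le> real n * sqrt q * exp (- q * real n)")
  case True
  then show ?thesis
    using gnq_prob_matching_number_window_le[OF assms]
    by (simp add: window_error_def mult.assoc add.assoc)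
next
  case False
  have "gnq_prob n q (\<lambda>E. a \<le> real (matching_number E) \<and>
           real (matching_number E) \<le> a + of_int \<lfloor>d * real n * sqrt q * exp (- q * real n)\<rfloor>) \<le> 1"
    by (rule gnq_prob_le_1[OF assms(1,2)])
  with False assms(3) show ?thesis
    by (simp add: window_error_def add_increasing)
qed

theorem lemma10:
  fixes q :: "nat \<Rightarrow> real"
  assumes q_range: "\<And>n. 0 \<le> q n \<and> q n \<le> 1"
    and q_growth: "filterlim (\<lambda>n. real n * sqrt (q n) * exp (- q n * real n)) at_top sequentially"
  shows "\<forall>\<epsilon>>0. \<exists>d>0. \<exists>\<delta> :: nat \<Rightarrow> real. \<delta> \<longlonglongrightarrow> 0 \<and>
           (\<forall>n. \<forall>a :: real.
              gnq_prob n (q n)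
                (\<lambda>E. a \<le> real (matching_number E) \<and>
                     real (matching_number E) \<le> a + of_int \<lfloor>d * real n * sqrt (q n) * exp (- q n * real n)\<rfloor>)
              \<le> \<epsilon> + \<delta> n)"
proof (intro allI impI)
  fix \<epsilon> :: real assume "\<epsilon> > 0"
  define d where "d = \<epsilon> / (16 * exp 10)"
  have d: "d > 0" "16 * exp 10 * d = \<epsilon>"
    using \<open>\<epsilon> > 0\<close> by (simp_all add: d_def)
  have "(\<lambda>n. window_error (real n * sqrt (q n) * exp (- q n * real n))) \<longlonglongrightarrow> 0"
    by (rule filterlim_compose[OF window_error_tendsto_0 q_growth])
  moreover have "gnq_prob n (q n) (\<lambda>E. a \<le> real (matching_number E) \<and>
                   real (matching_number E) \<le> a + of_int \<lfloor>d * real n * sqrt (q n) * exp (- q n * real n)\<rfloor>)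
                 \<le> \<epsilon> + window_error (real n * sqrt (q n) * exp (- q n * real n))" for n a
    using gnq_prob_matching_number_window_le_error[of "q n" d n a] q_range[of n] d by simp
  ultimately show "\<exists>d>0. \<exists>\<delta> :: nat \<Rightarrow> real. \<delta> \<longlonglongrightarrow> 0 \<and>
           (\<forall>n. \<forall>a :: real.
              gnq_prob n (q n)
                (\<lambda>E. a \<le> real (matching_number E) \<and>
                     real (matching_number E) \<le> a + of_int \<lfloor>d * real n * sqrt (q n) * exp (- q n * real n)\<rfloor>)
              \<le> \<epsilon> + \<delta> n)"
    using d(1) by blast
qed

end
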